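(* Let $n\ge 2$ and let $f\colon[0,\infty)\to[0,\infty)$ be moderately increasing and convex. Put $M(x,y)=f(x)f(y)$ and $\rho_M(x,y)=\dfrac{|x-y|}{f(|x|)f(|y|)}$ for $x,y\in\mathbb{R}^n$. Then $\rho_M$ is $c$--quasiconvex in $\mathbb{R}^n$ for some $c\le\sqrt{\pi^2/4+4}$.
   Context: Convention $0/0=0$. A function $f\colon[0,\infty)\to[0,\infty)$ is moderately increasing if it is increasing and $f(t)/t$ is decreasing on $(0,\infty)$. For a path $\gamma\colon[0,l]\to\mathbb{R}^n$, $\ell_M(\gamma)=\lim\sum_i\rho_M(\gamma(t_i),\gamma(t_{i+1}))$, the limit over partitions $0=t_0<\dots<t_m=l$ with mesh tending to $0$. $\rho_M$ is $c$--quasiconvex if $\inf_\gamma\ell_M(\gamma)\le c\,\rho_M(x,y)$ for all $x,y$, the infimum over rectifiable paths joining $x$ and $y$. *)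

theory Defs
  imports "HOL-Analysis.Analysis" "HOL-Library.Extended_Real"
begin

definition moderately_increasing :: "(real \<Rightarrow> real) \<Rightarrow> bool" where
  "moderately_increasing f \<longleftrightarrow>
     mono_on {0..} f \<and> antimono_on {0<..} (\<lambda>t. f t / t)"

definition rhoM :: "(real \<Rightarrow> real) \<Rightarrow> 'a::euclidean_space \<Rightarrow> 'a \<Rightarrow> ereal" where
  "rhoM f x y =
     (if f (norm x) * f (norm y) = 0 then (if x = y then 0 else \<infinity>)
      else ereal (dist x y / (f (norm x) * f (norm y))))"

definition is_partition :: "real \<Rightarrow> real list \<Rightarrow> bool" where
  "is_partition l ts \<longleftrightarrow> ts \<noteq> [] \<and> hd ts = 0 \<and> last ts = l \<and> sorted_wrt (<) ts"

definition mesh :: "real list \<Rightarrow> real" where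
  "mesh ts = foldr max (map (\<lambda>(a, b). b - a) (zip ts (tl ts))) 0"

definition psum :: "('a \<Rightarrow> 'a \<Rightarrow> 'b::monoid_add) \<Rightarrow> (real \<Rightarrow> 'a) \<Rightarrow> real list \<Rightarrow> 'b" where
  "psum d \<gamma> ts = sum_list (map (\<lambda>(a, b). d (\<gamma> a) (\<gamma> b)) (zip ts (tl ts)))"

definition partition_filter :: "real \<Rightarrow> real list filter" where
  "partition_filter l = (INF \<delta>\<in>{0<..}. principal {ts. is_partition l ts \<and> mesh ts < \<delta>})"

definition rectifiable_path_on :: "real \<Rightarrow> (real \<Rightarrow> 'a::euclidean_space) \<Rightarrow> bool" where
  "rectifiable_path_on l \<gamma> \<longleftrightarrow> 0 < l \<and> continuous_on {0..l} \<gamma> \<and>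
     bdd_above {psum dist \<gamma> ts | ts. is_partition l ts}"

definition has_M_length ::
  "('a \<Rightarrow> 'a \<Rightarrow> ereal) \<Rightarrow> real \<Rightarrow> (real \<Rightarrow> 'a) \<Rightarrow> ereal \<Rightarrow> bool" where
  "has_M_length \<rho> l \<gamma> L \<longleftrightarrow> ((\<lambda>ts. psum \<rho> \<gamma> ts) \<longlongrightarrow> L) (partition_filter l)"

definition quasiconvex :: "real \<Rightarrow> ('a::euclidean_space \<Rightarrow> 'a \<Rightarrow> ereal) \<Rightarrow> bool" where
  "quasiconvex c \<rho> \<longleftrightarrow> (\<forall>x y.
     (INF L\<in>{L. \<exists>l \<gamma>. rectifiable_path_on l \<gamma> \<and> \<gamma> 0 = x \<and> \<gamma> l = y \<and> has_M_length \<rho> l \<gamma> L}. L)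
       \<le> ereal c * \<rho> x y)"

end

theory Submission
  imports Defs
begin

(* Write x = r u and y = R v with unit vectors u, v at angle theta. Join them by a great-circle arc
   of angle theta on the sphere of radius rho in {r, R} that minimises rho / f(rho)^2, followed or
   preceded by a radial segment between the two spheres. Along a path that is 1-Lipschitz and
   parametrised by arclength up to a cubic error, the partition sums of rho_M converge to the
   integral of 1 / f(|gamma t|)^2, and they are controlled by any nondecreasing H with
   (b - a) / (f |gamma a| f |gamma b|) <= H b - H a. The arc then costs
   rho theta / f(rho)^2 <= sqrt(r R) theta / (f r f R). On the radial segment between m and M,
   moderate increase gives f t >= max (f m) (f M t / M), and integrating the square of the reciprocal
   of this bound gives cost at most 2 |R - r| / (f r f R). Jordan's inequality
   theta <= pi sin (theta / 2) and Cauchy-Schwarz for (pi / 2, 2) and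
   (2 sqrt(r R) sin (theta / 2), |R - r|), a vector of length |x - y|, give the constant
   sqrt (pi^2 / 4 + 4). Convexity of f is used only to make f continuous. *)

section \<open>Partitions\<close>

lemma foldr_max_ge: "x \<in> set xs \<Longrightarrow> x \<le> foldr max xs (0::real)"
  by (induction xs) auto

lemma foldr_max_le: "\<forall>x\<in>set xs. x \<le> c \<Longrightarrow> 0 \<le> c \<Longrightarrow> foldr max xs (0::real) \<le> c"
  by (induction xs) auto

lemma foldr_max_nonneg: "0 \<le> foldr max xs (0::real)"
  by (induction xs) (auto simp: le_max_iff_disj)

lemma mesh_nonneg: "0 \<le> mesh ts"
  unfolding mesh_def by (rule foldr_max_nonneg)

lemma partition_mem:
  assumes "is_partition l ts" and "t \<in> set ts"
  shows "0 \<le> t" "t \<le> l"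
proof -
  have "sorted ts" and ends: "ts ! 0 = 0" "ts ! (length ts - 1) = l"
    using assms(1) sorted_wrt_mono_rel[of ts "(<)" "(\<le>)"]
    by (auto simp: is_partition_def hd_conv_nth last_conv_nth)
  moreover obtain i where "i < length ts" "t = ts ! i"
    using assms(2) by (metis in_set_conv_nth)
  ultimately show "0 \<le> t" "t \<le> l"
    using sorted_nth_mono[of ts 0 i] sorted_nth_mono[of ts i "length ts - 1"] by auto
qed

lemma partition_step:
  assumes "is_partition l ts" and "(a, b) \<in> set (zip ts (tl ts))"
  shows "0 \<le> a" "a < b" "b \<le> l" "b - a \<le> mesh ts"
proof -
  obtain i where "i < length (tl ts)" "a = ts ! i" "b = tl ts ! i"
    using assms(2) by (auto simp: in_set_zip)
  then have i: "Suc i < length ts" "a = ts ! i" "b = ts ! Suc i"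
    by (auto simp: nth_tl)
  then show "0 \<le> a" "b \<le> l"
    using partition_mem[OF assms(1)] by auto
  show "a < b"
    using i assms(1) by (simp add: is_partition_def sorted_wrt_nth_less)
  show "b - a \<le> mesh ts"
    unfolding mesh_def using assms(2) by (intro foldr_max_ge) force
qed

lemma sum_steps_le_telescope:
  fixes g :: "real \<Rightarrow> real \<Rightarrow> real"
  assumes "sorted_wrt (<) ts" "ts \<noteq> []" "0 \<le> C"
    and "\<And>a b. (a, b) \<in> set (zip ts (tl ts)) \<Longrightarrow>
           g a b \<le> H b - H a + (if a < T \<and> T < b then C else 0)"
  shows "(\<Sum>(a, b)\<leftarrow>zip ts (tl ts). g a b) \<le> H (last ts) - H (hd ts) + C"
proof -
  \<comment> \<open>At most one step straddles \<open>T\<close>, so the surcharge \<open>C\<close> is paid at most once.\<close>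
  have "(\<Sum>(a, b)\<leftarrow>zip ts (tl ts). g a b) \<le> H (last ts) - H (hd ts) + (if hd ts < T then C else 0)"
    using assms(1,2,4)
  proof (induction ts rule: induct_list012)
    case (3 x y zs)
    have "g x y \<le> H y - H x + (if x < T \<and> T < y then C else 0)" and "x < y"
      using "3.prems" by auto
    moreover have "(\<Sum>(a, b)\<leftarrow>zip (y # zs) zs. g a b) \<le> H (last (y # zs)) - H y + (if y < T then C else 0)"
      using "3.IH"(2) "3.prems" by auto
    ultimately show ?case
      using \<open>0 \<le> C\<close> by (auto split: if_splits)
  qed (use \<open>0 \<le> C\<close> in auto)
  then show ?thesis
    using \<open>0 \<le> C\<close> by (auto split: if_splits)
qed

lemma partition_exists:
  assumes "0 < l" "0 < \<delta>"
  obtains ts where "is_partition l ts" "mesh ts < \<delta>"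
proof -
  obtain N :: nat where N: "l / \<delta> < real N"
    using reals_Archimedean2 by blast
  have "0 < l / \<delta>"
    using assms by simp
  then have N0: "0 < real N"
    using N by linarith
  define ts where "ts = map (\<lambda>k. real k * l / real N) [0..<Suc N]"
  have nth: "ts ! i = real i * l / real N" if "i < Suc N" for i
    using that by (simp add: ts_def del: upt_Suc)
  have "is_partition l ts"
    unfolding is_partition_def
  proof (intro conjI)
    show "ts \<noteq> []" by (simp add: ts_def)
    then show "hd ts = 0" "last ts = l"
      using nth[of 0] nth[of N] N0 by (simp_all add: hd_conv_nth last_conv_nth ts_def del: upt_Suc)
    show "sorted_wrt (<) ts"
      unfolding ts_def sorted_wrt_map
      by (rule sorted_wrt_mono_rel[OF _ sorted_wrt_upt])
        (use assms N0 in \<open>auto simp: divide_strict_right_mono\<close>)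
  qed
  moreover have "mesh ts \<le> l / real N"
    unfolding mesh_def
  proof (rule foldr_max_le)
    show "\<forall>x\<in>set (map (\<lambda>(a, b). b - a) (zip ts (tl ts))). x \<le> l / real N"
    proof
      fix x assume "x \<in> set (map (\<lambda>(a, b). b - a) (zip ts (tl ts)))"
      then obtain i where "i < N" "x = ts ! Suc i - ts ! i"
        by (auto simp: set_zip nth_tl ts_def simp del: upt_Suc)
      then show "x \<le> l / real N"
        using nth by (simp add: field_simps)
    qed
  qed (use assms N0 in simp)
  moreover have "l / real N < \<delta>"
    using N assms N0 by (simp add: field_simps)
  ultimately show ?thesis
    using that by fastforce
qed

lemma eventually_partition_filterI:
  assumes "0 < \<delta>" and "\<And>ts. is_partition l ts \<Longrightarrow> mesh ts < \<delta> \<Longrightarrow> P ts"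
  shows "eventually P (partition_filter l)"
  unfolding partition_filter_def
  by (rule eventually_INF1[of \<delta>]) (use assms in \<open>auto simp: eventually_principal\<close>)

lemma has_M_lengthI:
  assumes "\<And>ts. is_partition l ts \<Longrightarrow> psum \<rho> \<gamma> ts = ereal (S ts)"
    and "\<And>\<epsilon>. 0 < \<epsilon> \<Longrightarrow> \<exists>\<delta>>0. \<forall>ts. is_partition l ts \<and> mesh ts < \<delta> \<longrightarrow> \<bar>S ts - L\<bar> < \<epsilon>"
  shows "has_M_length \<rho> l \<gamma> (ereal L)"
proof -
  have "(S \<longlongrightarrow> L) (partition_filter l)"
  proof (rule tendstoI)
    fix \<epsilon> :: real assume "0 < \<epsilon>"
    then obtain \<delta> where "0 < \<delta>" "\<forall>ts. is_partition l ts \<and> mesh ts < \<delta> \<longrightarrow> \<bar>S ts - L\<bar> < \<epsilon>"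
      using assms(2) by blast
    then show "eventually (\<lambda>ts. dist (S ts) L < \<epsilon>) (partition_filter l)"
      by (intro eventually_partition_filterI[of \<delta>]) (auto simp: dist_real_def)
  qed
  moreover have "eventually (\<lambda>ts. ereal (S ts) = psum \<rho> \<gamma> ts) (partition_filter l)"
    by (rule eventually_partition_filterI[of 1]) (use assms(1) in auto)
  ultimately show ?thesis
    unfolding has_M_length_def by (blast intro: tendsto_ereal Lim_transform_eventually)
qed

lemma rectifiable_path_onI_lipschitz:
  fixes \<gamma> :: "real \<Rightarrow> 'a::euclidean_space"
  assumes "0 < l" "continuous_on {0..l} \<gamma>"
    and "\<And>a b. 0 \<le> a \<Longrightarrow> a \<le> b \<Longrightarrow> b \<le> l \<Longrightarrow> dist (\<gamma> a) (\<gamma> b) \<le> b - a"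
  shows "rectifiable_path_on l \<gamma>"
proof -
  have "psum dist \<gamma> ts \<le> l" if ts: "is_partition l ts" for ts
  proof -
    have "psum dist \<gamma> ts \<le> last ts - hd ts + 0"
      unfolding psum_def
    proof (rule sum_steps_le_telescope[where T = 0])
      fix a b assume step_ab: "(a, b) \<in> set (zip ts (tl ts))"
      have "0 \<le> a" "a \<le> b" "b \<le> l"
        using partition_step[OF ts step_ab] by auto
      then show "dist (\<gamma> a) (\<gamma> b) \<le> b - a + (if a < 0 \<and> 0 < b then 0 else 0)"
        using assms(3) by simp
    qed (use ts in \<open>auto simp: is_partition_def\<close>)
    then show ?thesis
      using ts by (simp add: is_partition_def)
  qed
  then show ?thesis
    using assms unfolding rectifiable_path_on_def bdd_above_def by blast
qed

section \<open>Riemann sums along nearly arclength parametrised paths\<close>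

lemma uniform_endpoint_product_approx:
  fixes w :: "real \<Rightarrow> real"
  assumes cont: "continuous_on {0..l} w" and "0 < \<eta>"
  obtains d where "0 < d"
    "\<And>a b. 0 \<le> a \<Longrightarrow> a \<le> b \<Longrightarrow> b \<le> l \<Longrightarrow> b - a < d \<Longrightarrow>
       \<bar>(b - a) * (w a * w b) - integral {a..b} (\<lambda>t. (w t)\<^sup>2)\<bar> \<le> \<eta> * (b - a)"
proof -
  obtain K where K: "0 \<le> K" "\<And>t. t \<in> {0..l} \<Longrightarrow> \<bar>w t\<bar> \<le> K"
    using continuous_on_compact_bound[OF compact_Icc cont] by auto
  define e where "e = \<eta> / (2 * K + 1)"
  have "0 < e"
    using K(1) \<open>0 < \<eta>\<close> by (simp add: e_def)
  then obtain d where "0 < d" and d: "\<And>s t. s \<in> {0..l} \<Longrightarrow> t \<in> {0..l} \<Longrightarrow> \<bar>s - t\<bar> < d \<Longrightarrow> \<bar>w s - w t\<bar> < e"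
    using compact_uniformly_continuous[OF cont compact_Icc]
    unfolding uniformly_continuous_on_def dist_real_def by metis
  show thesis
  proof (rule that[OF \<open>0 < d\<close>])
    fix a b assume ab: "0 \<le> a" "a \<le> b" "b \<le> l" "b - a < d"
    have close: "\<bar>w a * w b - (w t)\<^sup>2\<bar> \<le> \<eta>" if "t \<in> {a..b}" for t
    proof -
      have t: "t \<in> {0..l}" "\<bar>b - t\<bar> < d" "\<bar>a - t\<bar> < d"
        using that ab by auto
      have "w a * w b - (w t)\<^sup>2 = w a * (w b - w t) + w t * (w a - w t)"
        by (simp add: power2_eq_square algebra_simps)
      also have "\<bar>\<dots>\<bar> \<le> K * e + K * e"
        using K(2)[of a] K(2)[OF t(1)] d[OF _ t(1) t(2)] d[OF _ t(1) t(3)] ab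
        by (intro abs_triangle_ineq[THEN order_trans] add_mono)
          (auto simp: abs_mult intro!: mult_mono)
      also have "\<dots> \<le> (2 * K + 1) * e"
        using \<open>0 < e\<close> by simp
      also have "\<dots> = \<eta>"
        using K(1) by (simp add: e_def)
      finally show ?thesis .
    qed
    have "continuous_on {a..b} w"
      using cont by (rule continuous_on_subset) (use ab in auto)
    then have "(b - a) * (w a * w b) - integral {a..b} (\<lambda>t. (w t)\<^sup>2)
          = integral {a..b} (\<lambda>t. w a * w b - (w t)\<^sup>2)"
      using ab by (simp add: integral_diff integrable_continuous_interval continuous_intros)
    also have "\<bar>\<dots>\<bar> \<le> \<eta> * (b - a)"
    proof -
      have "continuous_on {a..b} (\<lambda>t. w a * w b - (w t)\<^sup>2)"
        using \<open>continuous_on {a..b} w\<close> by (intro continuous_intros)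
      then have "norm (integral {a..b} (\<lambda>t. w a * w b - (w t)\<^sup>2)) \<le> \<eta> * (b - a)"
        by (rule integral_bound[OF ab(2)]) (use close in auto)
      then show ?thesis
        by simp
    qed
    finally show "\<bar>(b - a) * (w a * w b) - integral {a..b} (\<lambda>t. (w t)\<^sup>2)\<bar> \<le> \<eta> * (b - a)" .
  qed
qed

lemma integral_0_diff:
  fixes w :: "real \<Rightarrow> real"
  assumes "continuous_on {0..l} w" "0 \<le> a" "a \<le> b" "b \<le> l"
  shows "integral {0..b} w - integral {0..a} w = integral {a..b} w"
proof -
  have "w integrable_on {0..b}"
    using assms by (intro integrable_continuous_interval continuous_on_subset[OF assms(1)]) auto
  then show ?thesis
    using Henstock_Kurzweil_Integration.integral_combine[where f = w and a = 0 and c = a and b = b] assms by simp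
qed

lemma chord_sum_le_integral:
  fixes w :: "real \<Rightarrow> real" and c :: "real \<Rightarrow> real \<Rightarrow> real"
  assumes ts: "is_partition l ts" "mesh ts < \<delta>"
    and w: "continuous_on {0..l} w" "\<And>t. t \<in> {0..l} \<Longrightarrow> 0 \<le> w t"
    and chord: "\<And>a b. 0 \<le> a \<Longrightarrow> a \<le> b \<Longrightarrow> b \<le> l \<Longrightarrow> c a b \<le> b - a"
    and step: "\<And>a b. 0 \<le> a \<Longrightarrow> a \<le> b \<Longrightarrow> b \<le> l \<Longrightarrow> b - a < \<delta> \<Longrightarrow>
                 (b - a) * (w a * w b) \<le> integral {a..b} (\<lambda>t. (w t)\<^sup>2) + \<eta> * (b - a)"
  shows "(\<Sum>(a, b)\<leftarrow>zip ts (tl ts). c a b * (w a * w b)) \<le> integral {0..l} (\<lambda>t. (w t)\<^sup>2) + \<eta> * l"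
proof -
  define G where "G t = integral {0..t} (\<lambda>t. (w t)\<^sup>2)" for t
  have sw: "sorted_wrt (<) ts" "ts \<noteq> []" "hd ts = 0" "last ts = l"
    using ts(1) by (auto simp: is_partition_def)
  have "(\<Sum>(a, b)\<leftarrow>zip ts (tl ts). c a b * (w a * w b))
      \<le> (G (last ts) + \<eta> * last ts) - (G (hd ts) + \<eta> * hd ts) + 0"
  proof (rule sum_steps_le_telescope[OF sw(1,2) order_refl, where T = 0])
    fix a b assume step_ab: "(a, b) \<in> set (zip ts (tl ts))"
    have ab: "0 \<le> a" "a \<le> b" "b \<le> l" "b - a < \<delta>"
      using partition_step[OF ts(1) step_ab] ts(2) by auto
    have "c a b * (w a * w b) \<le> (b - a) * (w a * w b)"
      using chord[OF ab(1-3)] w(2)[of a] w(2)[of b] ab by (intro mult_right_mono) auto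
    also have "\<dots> \<le> G b - G a + \<eta> * (b - a)"
      using step[OF ab] integral_0_diff[OF _ ab(1-3)] w(1) by (simp add: G_def continuous_intros)
    finally show "c a b * (w a * w b) \<le> G b + \<eta> * b - (G a + \<eta> * a) + (if a < 0 \<and> 0 < b then 0 else 0)"
      by (simp add: algebra_simps)
  qed
  then show ?thesis
    using sw by (simp add: G_def)
qed

lemma integral_le_chord_sum:
  fixes w :: "real \<Rightarrow> real" and c :: "real \<Rightarrow> real \<Rightarrow> real"
  assumes ts: "is_partition l ts" "mesh ts < \<delta>" and "0 \<le> \<kappa>"
    and w: "continuous_on {0..l} w" "\<And>t. t \<in> {0..l} \<Longrightarrow> 0 \<le> w t \<and> w t \<le> K"
    and chord: "\<And>a b. 0 \<le> a \<Longrightarrow> a \<le> b \<Longrightarrow> b \<le> l \<Longrightarrow> 0 \<le> c a b \<and> c a b \<le> b - a"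
    and defect: "\<And>a b. 0 \<le> a \<Longrightarrow> a \<le> b \<Longrightarrow> b \<le> l \<Longrightarrow> b \<le> T \<or> T \<le> a \<Longrightarrow>
                   b - a - c a b \<le> \<kappa> * (b - a) ^ 3"
    and step: "\<And>a b. 0 \<le> a \<Longrightarrow> a \<le> b \<Longrightarrow> b \<le> l \<Longrightarrow> b - a < \<delta> \<Longrightarrow>
                 integral {a..b} (\<lambda>t. (w t)\<^sup>2) \<le> (b - a) * (w a * w b) + \<eta> * (b - a)"
  shows "integral {0..l} (\<lambda>t. (w t)\<^sup>2)
           \<le> (\<Sum>(a, b)\<leftarrow>zip ts (tl ts). c a b * (w a * w b)) + (\<eta> + K\<^sup>2 * \<kappa> * \<delta>\<^sup>2) * l + K\<^sup>2 * \<delta>"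
proof -
  define G where "G t = integral {0..t} (\<lambda>t. (w t)\<^sup>2)" for t
  define e where "e = \<eta> + K\<^sup>2 * \<kappa> * \<delta>\<^sup>2"
  have sw: "sorted_wrt (<) ts" "ts \<noteq> []" "hd ts = 0" "last ts = l"
    using ts(1) by (auto simp: is_partition_def)
  have "0 \<le> \<delta>"
    using mesh_nonneg[of ts] ts(2) by linarith
  have "(\<Sum>(a, b)\<leftarrow>zip ts (tl ts). - (c a b * (w a * w b)))
      \<le> (- G (last ts) + e * last ts) - (- G (hd ts) + e * hd ts) + K\<^sup>2 * \<delta>"
  proof (rule sum_steps_le_telescope[OF sw(1,2)])
    show "0 \<le> K\<^sup>2 * \<delta>"
      using \<open>0 \<le> \<delta>\<close> by simp
    fix a b assume step_ab: "(a, b) \<in> set (zip ts (tl ts))"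
    have ab: "0 \<le> a" "a \<le> b" "b \<le> l" "b - a < \<delta>"
      using partition_step[OF ts(1) step_ab] ts(2) by auto
    \<comment> \<open>The chord deficit \<open>D\<close> is cubic in the step length, except on the one step across \<open>T\<close>.\<close>
    define D where "D = b - a - c a b"
    have D: "0 \<le> D" "D \<le> \<delta>"
      using chord[OF ab(1-3)] ab(4) unfolding D_def by linarith+
    have ww: "0 \<le> w a * w b" "w a * w b \<le> K\<^sup>2"
      using w(2)[of a] w(2)[of b] ab by (auto simp: power2_eq_square intro: mult_mono)
    have "G b - G a \<le> (b - a) * (w a * w b) + \<eta> * (b - a)"
      using step[OF ab] integral_0_diff[OF _ ab(1-3)] w(1) by (simp add: G_def continuous_intros)
    moreover have "D * (w a * w b) \<le> K\<^sup>2 * D"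
      using D ww by (simp add: mult_left_mono mult.commute)
    ultimately have gl: "- (c a b * (w a * w b)) \<le> - (G b - G a) + \<eta> * (b - a) + K\<^sup>2 * D"
      by (simp add: D_def algebra_simps)
    show "- (c a b * (w a * w b)) \<le> - G b + e * b - (- G a + e * a) + (if a < T \<and> T < b then K\<^sup>2 * \<delta> else 0)"
    proof (cases "a < T \<and> T < b")
      case True
      have "K\<^sup>2 * D \<le> K\<^sup>2 * \<delta>" and "0 \<le> K\<^sup>2 * \<kappa> * \<delta>\<^sup>2 * (b - a)"
        using D ab \<open>0 \<le> \<kappa>\<close> by (auto intro: mult_left_mono)
      then show ?thesis
        using gl True by (simp add: e_def algebra_simps)
    next
      case False
      then have "D \<le> \<kappa> * (b - a)\<^sup>2 * (b - a)"
        using defect[OF ab(1-3)] by (auto simp: D_def power3_eq_cube power2_eq_square mult.assoc)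
      also have "\<dots> \<le> \<kappa> * \<delta>\<^sup>2 * (b - a)"
        using ab \<open>0 \<le> \<kappa>\<close> by (intro mult_right_mono mult_left_mono power_mono) auto
      finally have "K\<^sup>2 * D \<le> K\<^sup>2 * (\<kappa> * \<delta>\<^sup>2 * (b - a))"
        by (intro mult_left_mono) auto
      then show ?thesis
        unfolding if_not_P[OF False] using gl by (simp add: e_def algebra_simps)
    qed
  qed
  moreover have "(\<Sum>(a, b)\<leftarrow>zip ts (tl ts). - (c a b * (w a * w b)))
      = - (\<Sum>(a, b)\<leftarrow>zip ts (tl ts). c a b * (w a * w b))"
    by (simp add: uminus_sum_list_map o_def case_prod_unfold)
  ultimately show ?thesis
    using sw by (simp add: G_def e_def)
qed

lemma sum_list_map_ereal: "(\<Sum>x\<leftarrow>xs. ereal (g x)) = ereal (\<Sum>x\<leftarrow>xs. g x)"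
  by (induction xs) auto

lemma psum_rhoM_eq:
  fixes \<gamma> :: "real \<Rightarrow> 'a::euclidean_space"
  assumes "is_partition l ts" and "\<And>t. t \<in> {0..l} \<Longrightarrow> 0 < f (norm (\<gamma> t))"
  shows "psum (rhoM f) \<gamma> ts = ereal (\<Sum>(a, b)\<leftarrow>zip ts (tl ts).
           dist (\<gamma> a) (\<gamma> b) * (1 / f (norm (\<gamma> a)) * (1 / f (norm (\<gamma> b)))))"
proof -
  have "rhoM f (\<gamma> a) (\<gamma> b) = ereal (dist (\<gamma> a) (\<gamma> b) * (1 / f (norm (\<gamma> a)) * (1 / f (norm (\<gamma> b)))))"
    if "(a, b) \<in> set (zip ts (tl ts))" for a b
    using partition_step[OF assms(1) that] assms(2)[of a] assms(2)[of b] by (simp add: rhoM_def)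
  then have "psum (rhoM f) \<gamma> ts = (\<Sum>(a, b)\<leftarrow>zip ts (tl ts).
      ereal (dist (\<gamma> a) (\<gamma> b) * (1 / f (norm (\<gamma> a)) * (1 / f (norm (\<gamma> b))))))"
    unfolding psum_def by (intro arg_cong[where f = sum_list] map_cong) auto
  also have "\<dots> = ereal (\<Sum>(a, b)\<leftarrow>zip ts (tl ts).
      dist (\<gamma> a) (\<gamma> b) * (1 / f (norm (\<gamma> a)) * (1 / f (norm (\<gamma> b)))))"
    by (simp add: sum_list_map_ereal case_prod_unfold)
  finally show ?thesis .
qed

lemma has_M_length_integral:
  fixes \<gamma> :: "real \<Rightarrow> 'a::euclidean_space" and f :: "real \<Rightarrow> real"
  assumes "0 < l" "0 \<le> \<kappa>"
    and cont: "continuous_on {0..l} (\<lambda>t. f (norm (\<gamma> t)))"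
    and pos: "\<And>t. t \<in> {0..l} \<Longrightarrow> 0 < f (norm (\<gamma> t))"
    and lip: "\<And>a b. 0 \<le> a \<Longrightarrow> a \<le> b \<Longrightarrow> b \<le> l \<Longrightarrow> dist (\<gamma> a) (\<gamma> b) \<le> b - a"
    and defect: "\<And>a b. 0 \<le> a \<Longrightarrow> a \<le> b \<Longrightarrow> b \<le> l \<Longrightarrow> b \<le> T \<or> T \<le> a \<Longrightarrow>
                   b - a - dist (\<gamma> a) (\<gamma> b) \<le> \<kappa> * (b - a) ^ 3"
  shows "has_M_length (rhoM f) l \<gamma> (ereal (integral {0..l} (\<lambda>t. (1 / f (norm (\<gamma> t)))\<^sup>2)))"
proof -
  define w where "w t = 1 / f (norm (\<gamma> t))" for t
  have wc: "continuous_on {0..l} w"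
    unfolding w_def by (intro continuous_intros cont) (use pos in force)
  obtain K where "0 \<le> K" and K: "\<And>t. t \<in> {0..l} \<Longrightarrow> \<bar>w t\<bar> \<le> K"
    using continuous_on_compact_bound[OF compact_Icc wc] by auto
  have w: "0 \<le> w t \<and> w t \<le> K" and w0: "0 \<le> w t" if "t \<in> {0..l}" for t
    using K[OF that] pos[OF that] by (simp_all add: w_def)
  show ?thesis
    unfolding w_def[symmetric]
  proof (rule has_M_lengthI)
    show "psum (rhoM f) \<gamma> ts = ereal (\<Sum>(a, b)\<leftarrow>zip ts (tl ts). dist (\<gamma> a) (\<gamma> b) * (w a * w b))"
      if "is_partition l ts" for ts
      unfolding w_def using that pos by (rule psum_rhoM_eq)
    fix \<epsilon> :: real assume "0 < \<epsilon>"
    define \<eta> where "\<eta> = \<epsilon> / (3 * l)"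
    define B where "B = K\<^sup>2 * (\<kappa> * l + 1) + 1"
    have "0 < \<eta>" "0 < B" "\<eta> * l = \<epsilon> / 3"
      using \<open>0 < \<epsilon>\<close> \<open>0 < l\<close> \<open>0 \<le> K\<close> \<open>0 \<le> \<kappa>\<close> by (auto simp: \<eta>_def B_def add_nonneg_pos)
    obtain d where "0 < d" and step: "\<And>a b. 0 \<le> a \<Longrightarrow> a \<le> b \<Longrightarrow> b \<le> l \<Longrightarrow> b - a < d \<Longrightarrow>
        \<bar>(b - a) * (w a * w b) - integral {a..b} (\<lambda>t. (w t)\<^sup>2)\<bar> \<le> \<eta> * (b - a)"
      using uniform_endpoint_product_approx[OF wc \<open>0 < \<eta>\<close>] by blast
    define \<delta> where "\<delta> = min d (min 1 (\<epsilon> / (3 * B)))"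
    have \<delta>: "0 < \<delta>" "\<delta> \<le> d" "\<delta> \<le> 1"
      using \<open>0 < d\<close> \<open>0 < B\<close> \<open>0 < \<epsilon>\<close> by (auto simp: \<delta>_def)
    have "B * \<delta> \<le> B * (\<epsilon> / (3 * B))"
      using \<open>0 < B\<close> by (intro mult_left_mono) (auto simp: \<delta>_def)
    then have B\<delta>: "B * \<delta> \<le> \<epsilon> / 3"
      using \<open>0 < B\<close> by simp
    show "\<exists>\<delta>>0. \<forall>ts. is_partition l ts \<and> mesh ts < \<delta> \<longrightarrow>
        \<bar>(\<Sum>(a, b)\<leftarrow>zip ts (tl ts). dist (\<gamma> a) (\<gamma> b) * (w a * w b)) - integral {0..l} (\<lambda>t. (w t)\<^sup>2)\<bar> < \<epsilon>"
    proof (intro exI[of _ \<delta>] conjI allI impI)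
      fix ts assume "is_partition l ts \<and> mesh ts < \<delta>"
      then have ts: "is_partition l ts" "mesh ts < \<delta>"
        by auto
      have chord: "0 \<le> dist (\<gamma> a) (\<gamma> b) \<and> dist (\<gamma> a) (\<gamma> b) \<le> b - a"
        if "0 \<le> a" "a \<le> b" "b \<le> l" for a b
        using lip[OF that] by simp
      have close: "(b - a) * (w a * w b) \<le> integral {a..b} (\<lambda>t. (w t)\<^sup>2) + \<eta> * (b - a)"
          "integral {a..b} (\<lambda>t. (w t)\<^sup>2) \<le> (b - a) * (w a * w b) + \<eta> * (b - a)"
        if "0 \<le> a" "a \<le> b" "b \<le> l" "b - a < \<delta>" for a b
        using step[OF that(1-3)] that(4) \<delta>(2) by (simp_all add: abs_le_iff)
      have "(\<Sum>(a, b)\<leftarrow>zip ts (tl ts). dist (\<gamma> a) (\<gamma> b) * (w a * w b)) \<le> integral {0..l} (\<lambda>t. (w t)\<^sup>2) + \<eta> * l"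
        using ts wc w0 lip close(1) by (rule chord_sum_le_integral)
      moreover have "integral {0..l} (\<lambda>t. (w t)\<^sup>2)
          \<le> (\<Sum>(a, b)\<leftarrow>zip ts (tl ts). dist (\<gamma> a) (\<gamma> b) * (w a * w b)) + (\<eta> + K\<^sup>2 * \<kappa> * \<delta>\<^sup>2) * l + K\<^sup>2 * \<delta>"
        using ts \<open>0 \<le> \<kappa>\<close> wc w chord defect close(2) by (rule integral_le_chord_sum)
      moreover have "K\<^sup>2 * \<kappa> * \<delta>\<^sup>2 * l + K\<^sup>2 * \<delta> \<le> B * \<delta>"
      proof -
        have "\<delta>\<^sup>2 \<le> \<delta>"
          using \<delta> by (simp add: power2_eq_square mult_le_cancel_left1)
        then have "K\<^sup>2 * \<kappa> * \<delta>\<^sup>2 * l \<le> K\<^sup>2 * \<kappa> * \<delta> * l"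
          using \<open>0 \<le> \<kappa>\<close> \<open>0 < l\<close> by (intro mult_right_mono mult_left_mono) auto
        then show ?thesis
          using \<delta>(1) by (simp add: B_def algebra_simps)
      qed
      ultimately show "\<bar>(\<Sum>(a, b)\<leftarrow>zip ts (tl ts). dist (\<gamma> a) (\<gamma> b) * (w a * w b)) - integral {0..l} (\<lambda>t. (w t)\<^sup>2)\<bar> < \<epsilon>"
        using B\<delta> \<open>\<eta> * l = \<epsilon> / 3\<close> \<open>0 < \<epsilon>\<close> by (simp add: abs_less_iff algebra_simps)
    qed (rule \<delta>(1))
  qed
qed

lemma integral_sq_le_majorant:
  fixes w H :: "real \<Rightarrow> real"
  assumes "0 < l" and w: "continuous_on {0..l} w" "\<And>t. t \<in> {0..l} \<Longrightarrow> 0 \<le> w t"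
    and Hb: "\<And>a b. 0 \<le> a \<Longrightarrow> a \<le> b \<Longrightarrow> b \<le> l \<Longrightarrow> b \<le> T \<or> T \<le> a \<Longrightarrow>
               (b - a) * (w a * w b) \<le> H b - H a"
    and Hm: "\<And>a b. 0 \<le> a \<Longrightarrow> a \<le> b \<Longrightarrow> b \<le> l \<Longrightarrow> H a \<le> H b"
  shows "integral {0..l} (\<lambda>t. (w t)\<^sup>2) \<le> H l - H 0"
proof (rule field_le_epsilon)
  fix \<epsilon> :: real assume "0 < \<epsilon>"
  obtain K where "0 \<le> K" and K: "\<And>t. t \<in> {0..l} \<Longrightarrow> \<bar>w t\<bar> \<le> K"
    using continuous_on_compact_bound[OF compact_Icc w(1)] by auto
  have wK: "0 \<le> w t \<and> w t \<le> K" if "t \<in> {0..l}" for t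
    using K[OF that] w(2)[OF that] by simp
  define \<eta> where "\<eta> = \<epsilon> / (2 * l)"
  have "0 < \<eta>" "\<eta> * l = \<epsilon> / 2"
    using \<open>0 < \<epsilon>\<close> \<open>0 < l\<close> by (auto simp: \<eta>_def)
  then obtain d where "0 < d" and step: "\<And>a b. 0 \<le> a \<Longrightarrow> a \<le> b \<Longrightarrow> b \<le> l \<Longrightarrow> b - a < d \<Longrightarrow>
      \<bar>(b - a) * (w a * w b) - integral {a..b} (\<lambda>t. (w t)\<^sup>2)\<bar> \<le> \<eta> * (b - a)"
    using uniform_endpoint_product_approx[OF w(1)] by blast
  define \<delta> where "\<delta> = min d (\<epsilon> / (4 * (K\<^sup>2 + 1)))"
  have "0 < K\<^sup>2 + 1"
    by (intro add_nonneg_pos) auto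
  then have "0 < \<delta>" "\<delta> \<le> d"
    using \<open>0 < d\<close> \<open>0 < \<epsilon>\<close> by (auto simp: \<delta>_def)
  have "K\<^sup>2 * \<delta> \<le> (K\<^sup>2 + 1) * (\<epsilon> / (4 * (K\<^sup>2 + 1)))"
    using \<open>0 < \<delta>\<close> by (intro mult_mono) (auto simp: \<delta>_def)
  also have "\<dots> = \<epsilon> / 4"
    using \<open>0 < K\<^sup>2 + 1\<close> by (simp add: field_simps)
  finally have K\<delta>: "K\<^sup>2 * \<delta> \<le> \<epsilon> / 4" .
  obtain ts where ts: "is_partition l ts" "mesh ts < \<delta>"
    using partition_exists[OF \<open>0 < l\<close> \<open>0 < \<delta>\<close>] .
  have sw: "sorted_wrt (<) ts" "ts \<noteq> []" "hd ts = 0" "last ts = l"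
    using ts(1) by (auto simp: is_partition_def)
  have "integral {0..l} (\<lambda>t. (w t)\<^sup>2)
      \<le> (\<Sum>(a, b)\<leftarrow>zip ts (tl ts). (b - a) * (w a * w b)) + (\<eta> + K\<^sup>2 * 0 * \<delta>\<^sup>2) * l + K\<^sup>2 * \<delta>"
  proof (rule integral_le_chord_sum[OF ts order_refl w(1) wK])
    show "integral {a..b} (\<lambda>t. (w t)\<^sup>2) \<le> (b - a) * (w a * w b) + \<eta> * (b - a)"
      if "0 \<le> a" "a \<le> b" "b \<le> l" "b - a < \<delta>" for a b
      using step[OF that(1-3)] that(4) \<open>\<delta> \<le> d\<close> by (simp add: abs_le_iff)
  qed auto
  moreover have "(\<Sum>(a, b)\<leftarrow>zip ts (tl ts). (b - a) * (w a * w b)) \<le> H (last ts) - H (hd ts) + K\<^sup>2 * \<delta>"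
  proof (rule sum_steps_le_telescope[OF sw(1,2), where T = T])
    fix a b assume step_ab: "(a, b) \<in> set (zip ts (tl ts))"
    have ab: "0 \<le> a" "a \<le> b" "b \<le> l" "b - a < \<delta>"
      using partition_step[OF ts(1) step_ab] ts(2) by auto
    show "(b - a) * (w a * w b) \<le> H b - H a + (if a < T \<and> T < b then K\<^sup>2 * \<delta> else 0)"
    proof (cases "a < T \<and> T < b")
      case True
      have "w a * w b \<le> K\<^sup>2"
        using wK[of a] wK[of b] ab by (auto simp: power2_eq_square intro: mult_mono)
      then have "(b - a) * (w a * w b) \<le> K\<^sup>2 * \<delta>"
        using ab wK[of a] wK[of b] by (subst mult.commute) (intro mult_mono, auto)
      then show ?thesis
        using Hm[OF ab(1-3)] True by simp
    next
      case False
      then show ?thesis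
        using Hb[OF ab(1-3)] by auto
    qed
  qed (use \<open>0 < \<delta>\<close> in simp)
  ultimately show "integral {0..l} (\<lambda>t. (w t)\<^sup>2) \<le> H l - H 0 + \<epsilon>"
    using sw \<open>\<eta> * l = \<epsilon> / 2\<close> K\<delta> by simp
qed

section \<open>Controlled paths\<close>

text \<open>\<open>\<gamma>\<close> is 1-Lipschitz on \<open>[0, l]\<close> and, away from the junction \<open>T\<close>, parametrised by arclength
  up to the cubic error \<open>\<kappa> (b - a)^3\<close>; the nondecreasing \<open>H\<close> majorises its \<open>\<rho>\<^sub>M\<close>-length there.\<close>

definition controlled_path ::
  "(real \<Rightarrow> real) \<Rightarrow> (real \<Rightarrow> 'a::euclidean_space) \<Rightarrow> real \<Rightarrow> (real \<Rightarrow> real) \<Rightarrow> real \<Rightarrow> real \<Rightarrow> bool"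
where
  "controlled_path f \<gamma> l H \<kappa> T \<longleftrightarrow>
     continuous_on {0..l} \<gamma> \<and> (\<forall>t\<in>{0..l}. 0 < f (norm (\<gamma> t))) \<and>
     (\<forall>a b. 0 \<le> a \<longrightarrow> a \<le> b \<longrightarrow> b \<le> l \<longrightarrow>
        dist (\<gamma> a) (\<gamma> b) \<le> b - a \<and> H a \<le> H b \<and>
        (b \<le> T \<or> T \<le> a \<longrightarrow>
           b - a - dist (\<gamma> a) (\<gamma> b) \<le> \<kappa> * (b - a) ^ 3 \<and>
           (b - a) / (f (norm (\<gamma> a)) * f (norm (\<gamma> b))) \<le> H b - H a))"

definition controlled_piece ::
  "(real \<Rightarrow> real) \<Rightarrow> (real \<Rightarrow> 'a::euclidean_space) \<Rightarrow> real \<Rightarrow> (real \<Rightarrow> real) \<Rightarrow> real \<Rightarrow> bool"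
where
  "controlled_piece f P l H \<kappa> \<longleftrightarrow> 0 \<le> l \<and> controlled_path f P l H \<kappa> 0"

lemma controlled_pieceD:
  assumes "controlled_piece f P l H \<kappa>"
  shows "0 \<le> l" "continuous_on {0..l} P" "\<And>t. t \<in> {0..l} \<Longrightarrow> 0 < f (norm (P t))"
    and "\<And>a b. 0 \<le> a \<Longrightarrow> a \<le> b \<Longrightarrow> b \<le> l \<Longrightarrow>
           dist (P a) (P b) \<le> b - a \<and> H a \<le> H b \<and> b - a - dist (P a) (P b) \<le> \<kappa> * (b - a) ^ 3 \<and>
           (b - a) / (f (norm (P a)) * f (norm (P b))) \<le> H b - H a"
  using assms by (auto simp: controlled_piece_def controlled_path_def)

lemma controlled_pieceI:
  assumes "0 \<le> l" "continuous_on {0..l} P" "\<And>t. t \<in> {0..l} \<Longrightarrow> 0 < f (norm (P t))"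
    and "\<And>a b. 0 \<le> a \<Longrightarrow> a \<le> b \<Longrightarrow> b \<le> l \<Longrightarrow>
           dist (P a) (P b) \<le> b - a \<and> H a \<le> H b \<and> b - a - dist (P a) (P b) \<le> \<kappa> * (b - a) ^ 3 \<and>
           (b - a) / (f (norm (P a)) * f (norm (P b))) \<le> H b - H a"
  shows "controlled_piece f P l H \<kappa>"
  using assms by (auto simp: controlled_piece_def controlled_path_def)

lemma controlled_path_M_length:
  fixes \<gamma> :: "real \<Rightarrow> 'a::euclidean_space"
  assumes "controlled_path f \<gamma> l H \<kappa> T" "0 < l" "0 \<le> \<kappa>" "continuous_on {0..} f"
  shows "rectifiable_path_on l \<gamma>" "\<exists>L. has_M_length (rhoM f) l \<gamma> (ereal L) \<and> L \<le> H l - H 0"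
proof -
  have cont: "continuous_on {0..l} \<gamma>" and pos: "\<And>t. t \<in> {0..l} \<Longrightarrow> 0 < f (norm (\<gamma> t))"
    and lip: "\<And>a b. 0 \<le> a \<Longrightarrow> a \<le> b \<Longrightarrow> b \<le> l \<Longrightarrow> dist (\<gamma> a) (\<gamma> b) \<le> b - a"
    and Hm: "\<And>a b. 0 \<le> a \<Longrightarrow> a \<le> b \<Longrightarrow> b \<le> l \<Longrightarrow> H a \<le> H b"
    and defect: "\<And>a b. 0 \<le> a \<Longrightarrow> a \<le> b \<Longrightarrow> b \<le> l \<Longrightarrow> b \<le> T \<or> T \<le> a \<Longrightarrow>
                   b - a - dist (\<gamma> a) (\<gamma> b) \<le> \<kappa> * (b - a) ^ 3"
    and Hb: "\<And>a b. 0 \<le> a \<Longrightarrow> a \<le> b \<Longrightarrow> b \<le> l \<Longrightarrow> b \<le> T \<or> T \<le> a \<Longrightarrow>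
               (b - a) * (1 / f (norm (\<gamma> a)) * (1 / f (norm (\<gamma> b)))) \<le> H b - H a"
    using assms(1) by (auto simp: controlled_path_def)
  show "rectifiable_path_on l \<gamma>"
    by (rule rectifiable_path_onI_lipschitz[OF \<open>0 < l\<close> cont lip])
  have cont_f: "continuous_on {0..l} (\<lambda>t. f (norm (\<gamma> t)))"
    by (rule continuous_on_compose2[OF assms(4)]) (auto intro: continuous_intros cont)
  have "has_M_length (rhoM f) l \<gamma> (ereal (integral {0..l} (\<lambda>t. (1 / f (norm (\<gamma> t)))\<^sup>2)))"
    using \<open>0 < l\<close> \<open>0 \<le> \<kappa>\<close> cont_f pos lip defect by (rule has_M_length_integral)
  moreover have "continuous_on {0..l} (\<lambda>t. 1 / f (norm (\<gamma> t)))"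
    by (intro continuous_intros cont_f) (use pos in force)
  then have "integral {0..l} (\<lambda>t. (1 / f (norm (\<gamma> t)))\<^sup>2) \<le> H l - H 0"
    by (rule integral_sq_le_majorant[OF \<open>0 < l\<close> _ _ Hb Hm]) (simp add: pos less_imp_le)
  ultimately show "\<exists>L. has_M_length (rhoM f) l \<gamma> (ereal L) \<and> L \<le> H l - H 0"
    by blast
qed

lemma controlled_piece_join:
  assumes P1: "controlled_piece f P1 l1 H1 \<kappa>" and P2: "controlled_piece f P2 l2 H2 \<kappa>"
    and join: "P1 l1 = P2 0"
  shows "controlled_path f (\<lambda>t. if t \<le> l1 then P1 t else P2 (t - l1)) (l1 + l2)
           (\<lambda>t. if t \<le> l1 then H1 t else H1 l1 + (H2 (t - l1) - H2 0)) \<kappa> l1"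
proof -
  define \<gamma> where "\<gamma> t = (if t \<le> l1 then P1 t else P2 (t - l1))" for t
  define H where "H t = (if t \<le> l1 then H1 t else H1 l1 + (H2 (t - l1) - H2 0))" for t
  note p1 = controlled_pieceD[OF P1] and p2 = controlled_pieceD[OF P2]
  have left: "\<gamma> t = P1 t" "H t = H1 t" if "t \<le> l1" for t
    using that by (simp_all add: \<gamma>_def H_def)
  have right: "\<gamma> t = P2 (t - l1)" "H t = H1 l1 + (H2 (t - l1) - H2 0)" if "l1 \<le> t" for t
    using that join by (auto simp: \<gamma>_def H_def)
  have "continuous_on {0..l1 + l2} \<gamma>"
    unfolding \<gamma>_def
  proof (rule continuous_on_cases_le[where h = "\<lambda>t. t"])
    show "continuous_on {t \<in> {0..l1 + l2}. t \<le> l1} P1"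
      by (rule continuous_on_subset[OF p1(2)]) auto
    show "continuous_on {t \<in> {0..l1 + l2}. l1 \<le> t} (\<lambda>t. P2 (t - l1))"
      by (rule continuous_on_compose2[OF p2(2)]) (auto intro: continuous_intros)
  qed (auto intro: continuous_intros join)
  moreover have "0 < f (norm (\<gamma> t))" if "t \<in> {0..l1 + l2}" for t
    using that p1(3)[of t] p2(3)[of "t - l1"] left right by (cases "t \<le> l1") auto
  moreover have "dist (\<gamma> a) (\<gamma> b) \<le> b - a \<and> H a \<le> H b \<and>
      (b \<le> l1 \<or> l1 \<le> a \<longrightarrow> b - a - dist (\<gamma> a) (\<gamma> b) \<le> \<kappa> * (b - a) ^ 3 \<and>
         (b - a) / (f (norm (\<gamma> a)) * f (norm (\<gamma> b))) \<le> H b - H a)"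
    if ab: "0 \<le> a" "a \<le> b" "b \<le> l1 + l2" for a b
  proof -
    consider "b \<le> l1" | "l1 \<le> a" | "a < l1" "l1 < b"
      by linarith
    then show ?thesis
    proof cases
      case 1
      then show ?thesis
        using p1(4)[of a b] left[of a] left[of b] ab by auto
    next
      case 2
      then show ?thesis
        using p2(4)[of "a - l1" "b - l1"] right[of a] right[of b] ab by auto
    next
      case 3
      have "dist (\<gamma> a) (\<gamma> b) \<le> dist (\<gamma> a) (\<gamma> l1) + dist (\<gamma> l1) (\<gamma> b)"
        by (rule dist_triangle)
      also have "\<dots> \<le> (l1 - a) + (b - l1)"
        using p1(4)[of a l1] p2(4)[of 0 "b - l1"] left[of a] left[of l1] right[of l1] right[of b] ab 3
        by (intro add_mono) auto
      finally show ?thesis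
        using p1(4)[of a l1] p2(4)[of 0 "b - l1"] left[of a] right[of b] ab 3 by auto
    qed
  qed
  ultimately show ?thesis
    unfolding controlled_path_def \<gamma>_def[symmetric] H_def[symmetric] by blast
qed

lemma two_piece_path:
  fixes P1 P2 :: "real \<Rightarrow> 'a::euclidean_space"
  assumes P1: "controlled_piece f P1 l1 H1 \<kappa>" and P2: "controlled_piece f P2 l2 H2 \<kappa>"
    and join: "P1 l1 = P2 0" and "P1 0 \<noteq> P2 l2" "0 \<le> \<kappa>" "continuous_on {0..} f"
  shows "\<exists>l \<gamma> L. rectifiable_path_on l \<gamma> \<and> \<gamma> 0 = P1 0 \<and> \<gamma> l = P2 l2 \<and>
           has_M_length (rhoM f) l \<gamma> (ereal L) \<and> L \<le> (H1 l1 - H1 0) + (H2 l2 - H2 0)"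
proof -
  define \<gamma> where "\<gamma> t = (if t \<le> l1 then P1 t else P2 (t - l1))" for t
  define H where "H t = (if t \<le> l1 then H1 t else H1 l1 + (H2 (t - l1) - H2 0))" for t
  have "0 \<le> l1" "0 \<le> l2"
    using P1 P2 by (auto simp: controlled_piece_def)
  moreover have "l1 + l2 \<noteq> 0"
  proof
    assume "l1 + l2 = 0"
    then have "l1 = 0" "l2 = 0"
      using calculation by linarith+
    then show False
      using join \<open>P1 0 \<noteq> P2 l2\<close> by simp
  qed
  ultimately have "0 < l1 + l2"
    by linarith
  have path: "controlled_path f \<gamma> (l1 + l2) H \<kappa> l1"
    unfolding \<gamma>_def H_def by (rule controlled_piece_join[OF P1 P2 join])
  obtain L where "has_M_length (rhoM f) (l1 + l2) \<gamma> (ereal L)" "L \<le> H (l1 + l2) - H 0"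
    using controlled_path_M_length(2)[OF path \<open>0 < l1 + l2\<close> assms(5,6)] by blast
  moreover have "\<gamma> 0 = P1 0" "\<gamma> (l1 + l2) = P2 l2" "H (l1 + l2) - H 0 = (H1 l1 - H1 0) + (H2 l2 - H2 0)"
    using \<open>0 \<le> l1\<close> \<open>0 \<le> l2\<close> join by (auto simp: \<gamma>_def H_def)
  ultimately show ?thesis
    using controlled_path_M_length(1)[OF path \<open>0 < l1 + l2\<close> assms(5,6)] by metis
qed

lemma controlled_piece_reverse:
  assumes "controlled_piece f P l H \<kappa>"
  shows "controlled_piece f (\<lambda>s. P (l - s)) l (\<lambda>s. - H (l - s)) \<kappa>"
proof (rule controlled_pieceI)
  note p = controlled_pieceD[OF assms]
  show "0 \<le> l"
    by (rule p(1))
  show "continuous_on {0..l} (\<lambda>s. P (l - s))"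
    by (rule continuous_on_compose2[OF p(2)]) (auto intro: continuous_intros)
  show "0 < f (norm (P (l - t)))" if "t \<in> {0..l}" for t
    using that p(3)[of "l - t"] by auto
  fix a b assume "0 \<le> a" "a \<le> b" "b \<le> l"
  then show "dist (P (l - a)) (P (l - b)) \<le> b - a \<and> - H (l - a) \<le> - H (l - b) \<and>
      b - a - dist (P (l - a)) (P (l - b)) \<le> \<kappa> * (b - a) ^ 3 \<and>
      (b - a) / (f (norm (P (l - a))) * f (norm (P (l - b)))) \<le> - H (l - b) - - H (l - a)"
    using p(4)[of "l - b" "l - a"] by (auto simp: dist_commute mult.commute)
qed

section \<open>Circular arcs\<close>

lemma x_minus_cube_le_sin:
  fixes x :: real
  assumes "0 \<le> x"
  shows "x - x ^ 3 / 6 \<le> sin x"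
proof -
  have "\<bar>sin x - (\<Sum>m<3. sin_coeff m * x ^ m)\<bar> \<le> inverse (fact 3) * \<bar>x\<bar> ^ 3"
    by (rule Maclaurin_sin_bound)
  moreover have "(\<Sum>m<3. sin_coeff m * x ^ m) = x" "inverse (fact 3) = (1 / 6 :: real)"
    by (simp_all add: sin_coeff_def eval_nat_numeral)
  ultimately have "\<bar>sin x - x\<bar> \<le> x ^ 3 / 6"
    using assms by simp
  then show ?thesis
    by linarith
qed

lemma jordan_inequality:
  assumes "0 \<le> x" "x \<le> pi / 2"
  shows "2 * x / pi \<le> sin x"
proof -
  have "convex_on {0..pi/2} (\<lambda>x. 2 * x / pi - sin x)"
  proof (rule convex_on_realI[where f' = "\<lambda>x. 2 / pi - cos x"])
    show "((\<lambda>x. 2 * x / pi - sin x) has_real_derivative 2 / pi - cos y) (at y)" for y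
      by (auto intro!: derivative_eq_intros)
    show "2 / pi - cos y \<le> 2 / pi - cos z" if "y \<in> {0..pi/2}" "z \<in> {0..pi/2}" "y \<le> z" for y z
      using that by (simp add: cos_monotone_0_pi_le)
  qed simp
  moreover have "0 \<le> 2 * x / pi" "2 * x / pi \<le> 1"
    using assms by (auto simp: field_simps)
  ultimately have "2 * ((2 * x / pi) * (pi / 2)) / pi - sin ((2 * x / pi) * (pi / 2)) \<le> 0"
    using convex_onD_Icc[of 0 "pi / 2" "\<lambda>x. 2 * x / pi - sin x" "2 * x / pi"] by simp
  then show ?thesis
    by simp
qed

lemma norm_orthonormal_combination:
  fixes p q :: "'a::real_inner"
  assumes "norm p = 1" "norm q = 1" "inner p q = 0"
  shows "norm (c *\<^sub>R p + d *\<^sub>R q) = sqrt (c\<^sup>2 + d\<^sup>2)"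
proof -
  have "inner p p = 1" "inner q q = 1"
    using assms(1,2) by (simp_all add: power2_norm_eq_inner[symmetric])
  then show ?thesis
    using assms(3)
    by (simp add: norm_eq_sqrt_inner inner_add_left inner_add_right inner_commute[of q p] power2_eq_square)
qed

definition circle_arc :: "real \<Rightarrow> 'a::real_inner \<Rightarrow> 'a \<Rightarrow> real \<Rightarrow> 'a" where
  "circle_arc r p q s = r *\<^sub>R (cos (s / r) *\<^sub>R p + sin (s / r) *\<^sub>R q)"

lemma circle_arc_0: "circle_arc r p q 0 = r *\<^sub>R p"
  by (simp add: circle_arc_def)

lemma circle_arc_end: "circle_arc r p q (r * \<theta>) = r *\<^sub>R (cos \<theta> *\<^sub>R p + sin \<theta> *\<^sub>R q)"
  by (cases "r = 0") (simp_all add: circle_arc_def)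

lemma circle_arc_dist:
  assumes "norm p = 1" "norm q = 1" "inner p q = 0" "0 < r"
  shows "dist (circle_arc r p q a) (circle_arc r p q b) = 2 * r * \<bar>sin ((b - a) / (2 * r))\<bar>"
proof -
  define y where "y = (b - a) / (2 * r)"
  have diff: "circle_arc r p q b - circle_arc r p q a
      = r *\<^sub>R ((cos (b / r) - cos (a / r)) *\<^sub>R p + (sin (b / r) - sin (a / r)) *\<^sub>R q)"
    by (simp add: circle_arc_def algebra_simps)
  have "dist (circle_arc r p q a) (circle_arc r p q b) = norm (circle_arc r p q b - circle_arc r p q a)"
    by (simp add: dist_norm norm_minus_commute)
  also have "\<dots> = r * sqrt ((cos (b / r) - cos (a / r))\<^sup>2 + (sin (b / r) - sin (a / r))\<^sup>2)"
    unfolding diff using norm_orthonormal_combination[OF assms(1-3)] assms(4) by simp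
  also have "(cos (b / r) - cos (a / r))\<^sup>2 + (sin (b / r) - sin (a / r))\<^sup>2 = 2 - 2 * cos (b / r - a / r)"
    by (simp add: cos_diff power2_diff algebra_simps)
  also have "\<dots> = (2 * sin y)\<^sup>2"
    using assms(4) cos_double_sin[of y] by (simp add: y_def diff_divide_distrib power_mult_distrib)
  finally show ?thesis
    unfolding real_sqrt_abs using assms(4) by (simp add: y_def abs_mult)
qed

lemma circle_arc_norm:
  assumes "norm p = 1" "norm q = 1" "inner p q = 0" "0 \<le> r"
  shows "norm (circle_arc r p q s) = r"
  using norm_orthonormal_combination[OF assms(1-3)] assms(4) by (simp add: circle_arc_def)

lemma circle_arc_chord_bounds:
  assumes pq: "norm p = 1" "norm q = 1" "inner p q = 0" and "0 < r" "a \<le> b" "b - a \<le> r * pi"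
  shows "dist (circle_arc r p q a) (circle_arc r p q b) \<le> b - a"
    and "b - a - dist (circle_arc r p q a) (circle_arc r p q b) \<le> 1 / (24 * r\<^sup>2) * (b - a) ^ 3"
proof -
  define x where "x = (b - a) / (2 * r)"
  have "b - a = 2 * r * x" and x: "0 \<le> x" "x \<le> pi / 2"
    using assms(4-6) by (auto simp: x_def field_simps)
  moreover have "0 \<le> sin x"
    using x by (intro sin_ge_zero) auto
  ultimately have dist: "dist (circle_arc r p q a) (circle_arc r p q b) = 2 * r * sin x"
    using circle_arc_dist[OF pq \<open>0 < r\<close>, of a b] by (simp add: x_def)
  show "dist (circle_arc r p q a) (circle_arc r p q b) \<le> b - a"
    using dist \<open>b - a = 2 * r * x\<close> sin_x_le_x[OF x(1)] \<open>0 < r\<close> by simp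
  have "b - a - dist (circle_arc r p q a) (circle_arc r p q b) = 2 * r * (x - sin x)"
    using dist \<open>b - a = 2 * r * x\<close> by (simp add: algebra_simps)
  also have "\<dots> \<le> 2 * r * (x ^ 3 / 6)"
    using \<open>0 < r\<close> x_minus_cube_le_sin[OF x(1)] by (intro mult_left_mono) auto
  also have "\<dots> = 1 / (24 * r\<^sup>2) * (b - a) ^ 3"
    using \<open>0 < r\<close> \<open>b - a = 2 * r * x\<close> by (simp add: field_simps power3_eq_cube power2_eq_square)
  finally show "b - a - dist (circle_arc r p q a) (circle_arc r p q b) \<le> 1 / (24 * r\<^sup>2) * (b - a) ^ 3" .
qed

lemma arc_piece:
  fixes u q :: "'a::euclidean_space"
  assumes uq: "norm u = 1" "norm q = 1" "inner u q = 0"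
    and "0 \<le> r" "0 \<le> \<theta>" "\<theta> \<le> pi" "0 < f r"
  shows "controlled_piece f (circle_arc r u q) (r * \<theta>) (\<lambda>s. s / (f r)\<^sup>2) (1 / (24 * r\<^sup>2))"
proof (rule controlled_pieceI)
  show "0 \<le> r * \<theta>"
    using assms by simp
  show "continuous_on {0..r * \<theta>} (circle_arc r u q)"
    unfolding circle_arc_def divide_inverse by (intro continuous_intros)
  show "0 < f (norm (circle_arc r u q t))" for t
    using circle_arc_norm[OF uq \<open>0 \<le> r\<close>] \<open>0 < f r\<close> by simp
  fix a b assume ab: "0 \<le> a" "a \<le> b" "b \<le> r * \<theta>"
  have "dist (circle_arc r u q a) (circle_arc r u q b) \<le> b - a \<and>
      b - a - dist (circle_arc r u q a) (circle_arc r u q b) \<le> 1 / (24 * r\<^sup>2) * (b - a) ^ 3"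
  proof (cases "r = 0")
    case True
    then show ?thesis
      using ab by (simp add: circle_arc_def)
  next
    case False
    have "b - a \<le> r * pi"
      using ab mult_left_mono[OF \<open>\<theta> \<le> pi\<close> \<open>0 \<le> r\<close>] by linarith
    then show ?thesis
      using circle_arc_chord_bounds[OF uq _ ab(2)] False \<open>0 \<le> r\<close> by simp
  qed
  then show "dist (circle_arc r u q a) (circle_arc r u q b) \<le> b - a \<and> a / (f r)\<^sup>2 \<le> b / (f r)\<^sup>2 \<and>
      b - a - dist (circle_arc r u q a) (circle_arc r u q b) \<le> 1 / (24 * r\<^sup>2) * (b - a) ^ 3 \<and>
      (b - a) / (f (norm (circle_arc r u q a)) * f (norm (circle_arc r u q b))) \<le> b / (f r)\<^sup>2 - a / (f r)\<^sup>2"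
    using ab circle_arc_norm[OF uq \<open>0 \<le> r\<close>]
    by (simp add: divide_right_mono power2_eq_square diff_divide_distrib)
qed

section \<open>Radial segments\<close>

text \<open>The primitive, vanishing at \<open>m\<close>, of \<open>1 / g\<^sup>2\<close> for the lower bound
  \<open>g t = max (f m) (f M * t / M) \<le> f t\<close> on \<open>[m, M]\<close> given by moderate increase; the two
  branches of \<open>g\<close> meet at \<open>s = M * f m / f M\<close>.\<close>

definition radial_majorant :: "(real \<Rightarrow> real) \<Rightarrow> real \<Rightarrow> real \<Rightarrow> real \<Rightarrow> real" where
  "radial_majorant f m M t = (let s = M * f m / f M in
     if t \<le> s then (t - m) / (f m)\<^sup>2 else (s - m) / (f m)\<^sup>2 + (M / f M)\<^sup>2 * (1 / s - 1 / t))"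

lemma moderately_increasing_lower_bound:
  fixes f :: "real \<Rightarrow> real"
  assumes anti: "antimono_on {0<..} (\<lambda>t. f t / t)" and "0 < t" "t \<le> M"
  shows "f M * t / M \<le> f t"
proof -
  have "0 < M"
    using assms(2,3) by linarith
  then have "f M / M \<le> f t / t"
    using monotone_onD[OF anti, of t M] assms(2,3) by simp
  then show ?thesis
    using assms(2,3) by (simp add: field_simps)
qed

lemma radial_threshold_bounds:
  fixes f :: "real \<Rightarrow> real"
  assumes mono: "mono_on {0..} f" and anti: "antimono_on {0<..} (\<lambda>t. f t / t)"
    and "0 \<le> m" "m \<le> M" "0 < M" "0 < f m"
  shows "f m \<le> f M" "0 < f M" "m \<le> M * f m / f M" "M * f m / f M \<le> M"
proof -
  show "f m \<le> f M"
    using mono assms(3,4) by (auto simp: mono_on_def)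
  then show "0 < f M"
    using \<open>0 < f m\<close> by linarith
  show "M * f m / f M \<le> M"
    using \<open>0 < f M\<close> \<open>f m \<le> f M\<close> \<open>0 < M\<close> by (simp add: field_simps)
  have "m * f M \<le> M * f m"
  proof (cases "m = 0")
    case False
    then have "f M * m / M \<le> f m"
      using assms(3,4) by (intro moderately_increasing_lower_bound[OF anti]) auto
    then show ?thesis
      using \<open>0 < M\<close> by (simp add: field_simps)
  qed (use \<open>0 < M\<close> \<open>0 < f m\<close> in simp)
  then show "m \<le> M * f m / f M"
    using \<open>0 < f M\<close> by (simp add: field_simps)
qed

lemma radial_majorant_step:
  fixes f :: "real \<Rightarrow> real"
  assumes mono: "mono_on {0..} f" and anti: "antimono_on {0<..} (\<lambda>t. f t / t)"
    and "0 \<le> m" "m \<le> p" "p \<le> q" "q \<le> M" "0 < f m"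
  shows "(q - p) / (f p * f q) \<le> radial_majorant f m M q - radial_majorant f m M p"
proof (cases "p = q")
  case False
  define s where "s = M * f m / f M"
  define \<Phi> where "\<Phi> = radial_majorant f m M"
  have f_ge: "f m \<le> f t" if "m \<le> t" for t
    using mono that \<open>0 \<le> m\<close> by (auto simp: mono_on_def)
  have "m \<le> M" "0 < M"
    using False assms by linarith+
  note s = radial_threshold_bounds[OF mono anti assms(3) \<open>m \<le> M\<close> \<open>0 < M\<close> assms(7), folded s_def]
  have "0 < s"
    using s(2) \<open>0 < M\<close> \<open>0 < f m\<close> by (simp add: s_def)
  have \<Phi>_low: "\<Phi> t = (t - m) / (f m)\<^sup>2" if "t \<le> s" for t
    using that by (simp add: \<Phi>_def radial_majorant_def s_def)
  have \<Phi>_high: "\<Phi> t = (s - m) / (f m)\<^sup>2 + (M / f M)\<^sup>2 * (1 / s - 1 / t)" if "s \<le> t" for t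
    using that by (cases "t = s") (simp_all add: \<Phi>_def radial_majorant_def s_def Let_def)
  have low: "x / (f p' * f q') \<le> x / (f m * f m)" if "0 \<le> x" "m \<le> p'" "m \<le> q'" for x p' q'
    using that f_ge[of p'] f_ge[of q'] \<open>0 < f m\<close> by (intro frac_le mult_mono) auto
  have high: "x / (f p' * f q') \<le> (M / f M)\<^sup>2 * (x / (a * b))"
    if "0 \<le> x" "0 < a" "0 < b" "b \<le> q'" "q' \<le> M" "f M * a / M \<le> f p'" for x a b p' q'
  proof -
    have "f M * b / M \<le> f M * q' / M"
      using that \<open>0 < M\<close> s(2) by (simp add: divide_right_mono)
    also have "\<dots> \<le> f q'"
      using that by (intro moderately_increasing_lower_bound[OF anti]) auto
    finally have "f M * b / M \<le> f q'" .
    moreover have "0 < f M * a / M" "0 < f M * b / M"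
      using that \<open>0 < M\<close> s(2) by simp_all
    ultimately have "x / (f p' * f q') \<le> x / ((f M * a / M) * (f M * b / M))"
      using that by (intro frac_le mult_mono mult_pos_pos) auto
    also have "\<dots> = (M / f M)\<^sup>2 * (x / (a * b))"
      using \<open>0 < M\<close> s(2) by (simp add: field_simps power2_eq_square)
    finally show ?thesis .
  qed
  consider "q \<le> s" | "s \<le> p" | "p < s" "s < q"
    by linarith
  then have "(q - p) / (f p * f q) \<le> \<Phi> q - \<Phi> p"
  proof cases
    case 1
    then show ?thesis
      using low[of "q - p" p q] assms by (simp add: \<Phi>_low diff_divide_distrib power2_eq_square)
  next
    case 2
    then have "0 < p"
      using \<open>0 < s\<close> by linarith
    then have "(q - p) / (f p * f q) \<le> (M / f M)\<^sup>2 * ((q - p) / (p * q))"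
      using assms moderately_increasing_lower_bound[OF anti \<open>0 < p\<close>] by (intro high) auto
    also have "(q - p) / (p * q) = 1 / p - 1 / q"
      using \<open>0 < p\<close> assms by (simp add: field_simps)
    also have "(M / f M)\<^sup>2 * (1 / p - 1 / q) = \<Phi> q - \<Phi> p"
      using 2 assms by (simp add: \<Phi>_high algebra_simps)
    finally show ?thesis .
  next
    case 3
    have "f M * s / M \<le> f p"
      using f_ge[of p] assms \<open>0 < M\<close> s(2) by (simp add: s_def)
    then have "(q - s) / (f p * f q) \<le> (M / f M)\<^sup>2 * ((q - s) / (s * q))"
      using 3 assms \<open>0 < s\<close> by (intro high) auto
    moreover have "(s - p) / (f p * f q) \<le> (s - p) / (f m * f m)"
      using 3 assms by (intro low) auto
    moreover have "(q - p) / (f p * f q) = (s - p) / (f p * f q) + (q - s) / (f p * f q)"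
      by (simp add: add_divide_distrib[symmetric])
    ultimately have "(q - p) / (f p * f q) \<le> (s - p) / (f m * f m) + (M / f M)\<^sup>2 * ((q - s) / (s * q))"
      by linarith
    also have "(q - s) / (s * q) = 1 / s - 1 / q"
      using 3 \<open>0 < s\<close> by (simp add: field_simps)
    also have "(s - p) / (f m * f m) + (M / f M)\<^sup>2 * (1 / s - 1 / q) = \<Phi> q - \<Phi> p"
      using 3 by (simp add: \<Phi>_low \<Phi>_high diff_divide_distrib power2_eq_square)
    finally show ?thesis .
  qed
  then show ?thesis
    by (simp only: \<Phi>_def)
qed simp

lemma radial_majorant_total:
  fixes f :: "real \<Rightarrow> real"
  assumes mono: "mono_on {0..} f" and anti: "antimono_on {0<..} (\<lambda>t. f t / t)"
    and "0 \<le> m" "m \<le> M" "0 < f m"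
  shows "radial_majorant f m M M - radial_majorant f m M m \<le> 2 * (M - m) / (f m * f M)"
proof (cases "m = M")
  case False
  define a where "a = f m"
  define b where "b = f M"
  define s where "s = M * a / b"
  have "0 < M"
    using False assms by linarith
  note bounds = radial_threshold_bounds[OF mono anti assms(3,4) \<open>0 < M\<close> assms(5), folded a_def b_def, folded s_def]
  have "0 < a"
    using \<open>0 < f m\<close> by (simp add: a_def)
  have "radial_majorant f m M m = 0"
    using bounds(3) by (simp add: radial_majorant_def s_def a_def b_def)
  moreover have "radial_majorant f m M M = 2 * M / (a * b) - m / a\<^sup>2 - M / b\<^sup>2"
  proof (cases "M \<le> s")
    case True
    then have "a = b"
      using bounds(1,2) \<open>0 < M\<close> by (simp add: s_def field_simps)
    then show ?thesis
      using True by (simp add: radial_majorant_def s_def a_def b_def power2_eq_square diff_divide_distrib)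
  next
    case False
    then show ?thesis
      using \<open>0 < a\<close> bounds(2) \<open>0 < M\<close>
      by (simp add: radial_majorant_def Let_def s_def a_def b_def field_simps power2_eq_square)
  qed
  moreover have "m / (a * b) \<le> m / a\<^sup>2"
    using \<open>0 < a\<close> bounds(1) \<open>0 \<le> m\<close> by (simp add: power2_eq_square divide_left_mono mult_left_mono)
  moreover have "m / (a * b) \<le> M / b\<^sup>2"
    using bounds(2,3) \<open>0 < a\<close> by (simp add: s_def field_simps power2_eq_square)
  ultimately show ?thesis
    by (simp add: a_def b_def diff_divide_distrib)
qed simp

lemma radial_piece_increasing:
  fixes e :: "'a::euclidean_space" and f :: "real \<Rightarrow> real"
  assumes mono: "mono_on {0..} f" and anti: "antimono_on {0<..} (\<lambda>t. f t / t)"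
    and "norm e = 1" "0 \<le> m" "m \<le> M" "0 < f m" "0 \<le> \<kappa>"
  shows "controlled_piece f (\<lambda>s. (m + s) *\<^sub>R e) (M - m) (\<lambda>s. radial_majorant f m M (m + s)) \<kappa>"
proof (rule controlled_pieceI)
  have norm_seg: "norm ((m + s) *\<^sub>R e) = m + s" if "0 \<le> s" for s
    using that assms by simp
  show "0 \<le> M - m" "continuous_on {0..M - m} (\<lambda>s. (m + s) *\<^sub>R e)"
    using assms by (auto intro!: continuous_intros)
  show "0 < f (norm ((m + t) *\<^sub>R e))" if "t \<in> {0..M - m}" for t
    using that norm_seg[of t] mono assms by (auto simp: mono_on_def intro: less_le_trans)
  fix a b assume ab: "0 \<le> a" "a \<le> b" "b \<le> M - m"
  have "dist ((m + a) *\<^sub>R e) ((m + b) *\<^sub>R e) = b - a"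
    using ab assms by (simp add: dist_norm flip: scaleR_diff_left)
  moreover have "(b - a) / (f (m + a) * f (m + b))
      \<le> radial_majorant f m M (m + b) - radial_majorant f m M (m + a)"
    using radial_majorant_step[OF mono anti, of m "m + a" "m + b" M] ab assms by simp
  moreover have "0 < f (m + a)" "0 < f (m + b)"
    using ab mono assms by (auto simp: mono_on_def intro: less_le_trans[OF \<open>0 < f m\<close>])
  then have "0 \<le> (b - a) / (f (m + a) * f (m + b))"
    using ab by simp
  ultimately show "dist ((m + a) *\<^sub>R e) ((m + b) *\<^sub>R e) \<le> b - a \<and>
      radial_majorant f m M (m + a) \<le> radial_majorant f m M (m + b) \<and>
      b - a - dist ((m + a) *\<^sub>R e) ((m + b) *\<^sub>R e) \<le> \<kappa> * (b - a) ^ 3 \<and>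
      (b - a) / (f (norm ((m + a) *\<^sub>R e)) * f (norm ((m + b) *\<^sub>R e)))
        \<le> radial_majorant f m M (m + b) - radial_majorant f m M (m + a)"
    using ab assms norm_seg by auto
qed

lemma radial_piece:
  fixes e :: "'a::euclidean_space" and f :: "real \<Rightarrow> real"
  assumes mono: "mono_on {0..} f" and anti: "antimono_on {0<..} (\<lambda>t. f t / t)"
    and "norm e = 1" "0 \<le> r" "0 \<le> R" "0 < f r" "0 < f R" "0 \<le> \<kappa>"
  obtains P H where "controlled_piece f P \<bar>R - r\<bar> H \<kappa>" "P 0 = r *\<^sub>R e" "P \<bar>R - r\<bar> = R *\<^sub>R e"
    "H \<bar>R - r\<bar> - H 0 \<le> 2 * \<bar>R - r\<bar> / (f r * f R)"
proof (cases "r \<le> R")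
  case True
  then show ?thesis
    using that[of "\<lambda>s. (r + s) *\<^sub>R e" "\<lambda>s. radial_majorant f r R (r + s)"]
      radial_piece_increasing[OF mono anti, of e r R \<kappa>] radial_majorant_total[OF mono anti, of r R] assms
    by simp
next
  case False
  then show ?thesis
    using that[of "\<lambda>s. (R + (r - R - s)) *\<^sub>R e" "\<lambda>s. - radial_majorant f R r (R + (r - R - s))"]
      controlled_piece_reverse[OF radial_piece_increasing[OF mono anti, of e R r \<kappa>]]
      radial_majorant_total[OF mono anti, of R r] assms
    by (simp add: mult.commute)
qed

section \<open>Joining two points\<close>

lemma unit_vector_angle:
  fixes u v :: "'a::euclidean_space"
  assumes "DIM('a) \<ge> 2" "norm u = 1" "norm v = 1"
  obtains \<theta> q where "0 \<le> \<theta>" "\<theta> \<le> pi" "norm q = 1" "inner u q = 0"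
    "v = cos \<theta> *\<^sub>R u + sin \<theta> *\<^sub>R q"
proof -
  define c where "c = inner u v"
  have "\<bar>c\<bar> \<le> 1"
    using Cauchy_Schwarz_ineq2[of u v] assms by (simp add: c_def)
  define \<theta> where "\<theta> = arccos c"
  have \<theta>: "0 \<le> \<theta>" "\<theta> \<le> pi" "cos \<theta> = c" "sin \<theta> = sqrt (1 - c\<^sup>2)"
    using \<open>\<bar>c\<bar> \<le> 1\<close> by (auto simp: \<theta>_def arccos_lbound arccos_ubound sin_arccos)
  define w where "w = v - c *\<^sub>R u"
  have "inner u u = 1" "inner v v = 1"
    using assms by (simp_all add: power2_norm_eq_inner[symmetric])
  then have "inner u w = 0" "norm w = sqrt (1 - c\<^sup>2)"
    by (simp_all add: w_def c_def norm_eq_sqrt_inner inner_diff_left inner_diff_right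
        inner_commute[of v u] power2_eq_square)
  show thesis
  proof (cases "w = 0")
    case False
    show thesis
    proof (rule that[OF \<theta>(1,2)])
      show "norm (w /\<^sub>R norm w) = 1" "inner u (w /\<^sub>R norm w) = 0"
        using False \<open>inner u w = 0\<close> by simp_all
      have "sqrt (1 - c\<^sup>2) \<noteq> 0"
        using False \<open>norm w = sqrt (1 - c\<^sup>2)\<close> by auto
      then show "v = cos \<theta> *\<^sub>R u + sin \<theta> *\<^sub>R (w /\<^sub>R norm w)"
        using \<theta> \<open>norm w = sqrt (1 - c\<^sup>2)\<close> by (simp add: w_def)
    qed
  next
    case True
    obtain z where "z \<noteq> 0" "orthogonal u z"
      using orthogonal_to_vector_exists[OF assms(1)] by blast
    show thesis
    proof (rule that[OF \<theta>(1,2)])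
      show "norm (z /\<^sub>R norm z) = 1" "inner u (z /\<^sub>R norm z) = 0"
        using \<open>z \<noteq> 0\<close> \<open>orthogonal u z\<close> by (simp_all add: orthogonal_def)
      show "v = cos \<theta> *\<^sub>R u + sin \<theta> *\<^sub>R (z /\<^sub>R norm z)"
        using True \<theta> \<open>norm w = sqrt (1 - c\<^sup>2)\<close> by (simp add: w_def)
    qed
  qed
qed

lemma polar_pair:
  fixes x y :: "'a::euclidean_space"
  assumes "DIM('a) \<ge> 2"
  obtains u v q \<theta> where "norm u = 1" "norm v = 1" "norm q = 1" "inner u q = 0" "0 \<le> \<theta>" "\<theta> \<le> pi"
    "v = cos \<theta> *\<^sub>R u + sin \<theta> *\<^sub>R q" "norm x *\<^sub>R u = x" "norm y *\<^sub>R v = y"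
proof -
  obtain e :: 'a where "norm e = 1"
    using vector_choose_size[of 1] by auto
  define u where "u = (if x = 0 then e else x /\<^sub>R norm x)"
  define v where "v = (if y = 0 then e else y /\<^sub>R norm y)"
  have u: "norm u = 1" "norm x *\<^sub>R u = x" and v: "norm v = 1" "norm y *\<^sub>R v = y"
    using \<open>norm e = 1\<close> by (auto simp: u_def v_def)
  obtain \<theta> q where "0 \<le> \<theta>" "\<theta> \<le> pi" "norm q = 1" "inner u q = 0" "v = cos \<theta> *\<^sub>R u + sin \<theta> *\<^sub>R q"
    using unit_vector_angle[OF assms u(1) v(1)] .
  then show thesis
    using that u v by blast
qed

lemma dist_polar:
  fixes u q :: "'a::euclidean_space"
  assumes "norm u = 1" "norm q = 1" "inner u q = 0"
  shows "(dist (r *\<^sub>R u) (R *\<^sub>R (cos \<theta> *\<^sub>R u + sin \<theta> *\<^sub>R q)))\<^sup>2 = r\<^sup>2 + R\<^sup>2 - 2 * r * R * cos \<theta>"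
proof -
  have "dist (r *\<^sub>R u) (R *\<^sub>R (cos \<theta> *\<^sub>R u + sin \<theta> *\<^sub>R q))
      = norm ((r - R * cos \<theta>) *\<^sub>R u + (- (R * sin \<theta>)) *\<^sub>R q)"
    unfolding dist_norm by (rule arg_cong[where f = norm]) (simp add: algebra_simps)
  also have "\<dots> = sqrt ((r - R * cos \<theta>)\<^sup>2 + (- (R * sin \<theta>))\<^sup>2)"
    by (rule norm_orthonormal_combination[OF assms])
  finally have "(dist (r *\<^sub>R u) (R *\<^sub>R (cos \<theta> *\<^sub>R u + sin \<theta> *\<^sub>R q)))\<^sup>2
      = (r - R * cos \<theta>)\<^sup>2 + (R * sin \<theta>)\<^sup>2"
    by simp
  also have "\<dots> = r\<^sup>2 + R\<^sup>2 * ((sin \<theta>)\<^sup>2 + (cos \<theta>)\<^sup>2) - 2 * r * R * cos \<theta>"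
    by (simp only: power2_eq_square) algebra
  finally show ?thesis
    by simp
qed

lemma cauchy_schwarz_2:
  fixes a1 a2 b1 b2 :: real
  shows "a1 * b1 + a2 * b2 \<le> sqrt (a1\<^sup>2 + a2\<^sup>2) * sqrt (b1\<^sup>2 + b2\<^sup>2)"
proof -
  have "(a1 * b1 + a2 * b2)\<^sup>2 \<le> (a1\<^sup>2 + a2\<^sup>2) * (b1\<^sup>2 + b2\<^sup>2)"
    using zero_le_power2[of "a1 * b2 - a2 * b1"] by (simp add: power2_eq_square algebra_simps)
  then show ?thesis
    by (simp add: real_sqrt_mult[symmetric] real_le_rsqrt)
qed

lemma arc_radial_bound:
  fixes r R \<theta> d z fr fR :: real
  assumes "0 < fr" "0 < fR" "0 \<le> r" "0 \<le> R" "0 \<le> \<theta>" "\<theta> \<le> pi"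
    and "0 \<le> z" "z \<le> r / fr\<^sup>2" "z \<le> R / fR\<^sup>2"
    and "0 \<le> d" "d\<^sup>2 = r\<^sup>2 + R\<^sup>2 - 2 * r * R * cos \<theta>"
  shows "z * \<theta> + 2 * \<bar>R - r\<bar> / (fr * fR) \<le> sqrt (pi\<^sup>2 / 4 + 4) * d / (fr * fR)"
proof -
  define A where "A = 2 * sqrt (r * R) * sin (\<theta> / 2)"
  have "z\<^sup>2 \<le> (r / fr\<^sup>2) * (R / fR\<^sup>2)"
    unfolding power2_eq_square[of z] using assms by (intro mult_mono) auto
  also have "\<dots> = (sqrt (r * R) / (fr * fR))\<^sup>2"
    using assms by (simp add: power_divide power_mult_distrib)
  finally have "z \<le> sqrt (r * R) / (fr * fR)"
    using assms by (simp add: power2_le_iff_abs_le)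
  moreover have "\<theta> \<le> pi * sin (\<theta> / 2)"
    using jordan_inequality[of "\<theta> / 2"] assms pi_gt_zero by (simp add: field_simps)
  ultimately have "z * \<theta> \<le> sqrt (r * R) / (fr * fR) * (pi * sin (\<theta> / 2))"
    using assms by (intro mult_mono) auto
  also have "\<dots> = (pi / 2) * A / (fr * fR)"
    by (simp add: A_def)
  finally have arc: "z * \<theta> \<le> (pi / 2) * A / (fr * fR)" .
  have "A\<^sup>2 = 4 * (r * R) * (sin (\<theta> / 2))\<^sup>2"
    using assms by (simp add: A_def power_mult_distrib)
  moreover have "d\<^sup>2 = r\<^sup>2 + R\<^sup>2 - 2 * r * R * (1 - 2 * (sin (\<theta> / 2))\<^sup>2)"
    using assms(11) cos_double_sin[of "\<theta> / 2"] by simp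
  ultimately have "A\<^sup>2 + \<bar>R - r\<bar>\<^sup>2 = d\<^sup>2"
    by (simp add: power2_diff algebra_simps)
  then have "(pi / 2) * A + 2 * \<bar>R - r\<bar> \<le> sqrt (pi\<^sup>2 / 4 + 4) * d"
    using cauchy_schwarz_2[of "pi / 2" A 2 "\<bar>R - r\<bar>"] \<open>0 \<le> d\<close> by (simp add: power_divide)
  then have "((pi / 2) * A + 2 * \<bar>R - r\<bar>) / (fr * fR) \<le> sqrt (pi\<^sup>2 / 4 + 4) * d / (fr * fR)"
    using assms(1,2) by (intro divide_right_mono) auto
  moreover have "((pi / 2) * A + 2 * \<bar>R - r\<bar>) / (fr * fR) = (pi / 2) * A / (fr * fR) + 2 * \<bar>R - r\<bar> / (fr * fR)"
    by (simp add: add_divide_distrib)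
  ultimately show ?thesis
    using arc by linarith
qed

lemma polar_path:
  fixes u q :: "'a::euclidean_space" and f :: "real \<Rightarrow> real"
  assumes mono: "mono_on {0..} f" and anti: "antimono_on {0<..} (\<lambda>t. f t / t)"
    and fc: "continuous_on {0..} f"
    and uq: "norm u = 1" "norm q = 1" "inner u q = 0" and \<theta>: "0 \<le> \<theta>" "\<theta> \<le> pi"
    and v: "v = cos \<theta> *\<^sub>R u + sin \<theta> *\<^sub>R q"
    and r: "0 \<le> r" "0 \<le> R" "0 < f r" "0 < f R" and xy: "r *\<^sub>R u \<noteq> R *\<^sub>R v"
  shows "\<exists>l \<gamma> L. rectifiable_path_on l \<gamma> \<and> \<gamma> 0 = r *\<^sub>R u \<and> \<gamma> l = R *\<^sub>R v \<and>
           has_M_length (rhoM f) l \<gamma> (ereal L) \<and>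
           L \<le> min (r / (f r)\<^sup>2) (R / (f R)\<^sup>2) * \<theta> + 2 * \<bar>R - r\<bar> / (f r * f R)"
proof (cases "r / (f r)\<^sup>2 \<le> R / (f R)\<^sup>2")
  case True
  have "norm v = 1"
    using norm_orthonormal_combination[OF uq] by (simp add: v)
  obtain P H where radial: "controlled_piece f P \<bar>R - r\<bar> H (1 / (24 * r\<^sup>2))"
    "P 0 = r *\<^sub>R v" "P \<bar>R - r\<bar> = R *\<^sub>R v" "H \<bar>R - r\<bar> - H 0 \<le> 2 * \<bar>R - r\<bar> / (f r * f R)"
    using radial_piece[OF mono anti \<open>norm v = 1\<close> r(1,2,3,4), of "1 / (24 * r\<^sup>2)"] by simp blast
  have "circle_arc r u q (r * \<theta>) = P 0"
    by (simp add: circle_arc_end v radial(2))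
  moreover have "circle_arc r u q 0 \<noteq> P \<bar>R - r\<bar>"
    using xy by (simp add: circle_arc_0 radial(3))
  ultimately obtain l \<gamma> L where "rectifiable_path_on l \<gamma>" "\<gamma> 0 = r *\<^sub>R u" "\<gamma> l = R *\<^sub>R v"
    "has_M_length (rhoM f) l \<gamma> (ereal L)" "L \<le> (r * \<theta> / (f r)\<^sup>2 - 0 / (f r)\<^sup>2) + (H \<bar>R - r\<bar> - H 0)"
    using two_piece_path[OF arc_piece[where f = f, OF uq r(1) \<theta> r(3)] radial(1)] fc
    by (auto simp: circle_arc_0 radial(3))
  moreover have "r * \<theta> / (f r)\<^sup>2 - 0 / (f r)\<^sup>2 = min (r / (f r)\<^sup>2) (R / (f R)\<^sup>2) * \<theta>"
    using True by (simp add: min_def)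
  ultimately show ?thesis
    using radial(4) by (intro exI conjI) (auto simp del: div_0)
next
  case False
  obtain P H where radial: "controlled_piece f P \<bar>R - r\<bar> H (1 / (24 * R\<^sup>2))"
    "P 0 = r *\<^sub>R u" "P \<bar>R - r\<bar> = R *\<^sub>R u" "H \<bar>R - r\<bar> - H 0 \<le> 2 * \<bar>R - r\<bar> / (f r * f R)"
    using radial_piece[OF mono anti uq(1) r(1,2,3,4), of "1 / (24 * R\<^sup>2)"] by simp blast
  have "P \<bar>R - r\<bar> = circle_arc R u q 0"
    by (simp add: circle_arc_0 radial(3))
  moreover have "P 0 \<noteq> circle_arc R u q (R * \<theta>)"
    using xy by (simp add: circle_arc_end v radial(2))
  ultimately obtain l \<gamma> L where "rectifiable_path_on l \<gamma>" "\<gamma> 0 = r *\<^sub>R u" "\<gamma> l = R *\<^sub>R v"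
    "has_M_length (rhoM f) l \<gamma> (ereal L)" "L \<le> (H \<bar>R - r\<bar> - H 0) + (R * \<theta> / (f R)\<^sup>2 - 0 / (f R)\<^sup>2)"
    using two_piece_path[OF radial(1) arc_piece[where f = f, OF uq r(2) \<theta> r(4)]] fc
    by (auto simp: circle_arc_end v radial(2))
  moreover have "R * \<theta> / (f R)\<^sup>2 - 0 / (f R)\<^sup>2 = min (r / (f r)\<^sup>2) (R / (f R)\<^sup>2) * \<theta>"
    using False by (simp add: min_def)
  ultimately show ?thesis
    using radial(4) by (intro exI conjI) (auto simp del: div_0)
qed

lemma rhoM_path_bound:
  fixes x y :: "'a::euclidean_space" and f :: "real \<Rightarrow> real"
  assumes "DIM('a) \<ge> 2" and mono: "mono_on {0..} f" and anti: "antimono_on {0<..} (\<lambda>t. f t / t)"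
    and fc: "continuous_on {0..} f" and "x \<noteq> y" "0 < f (norm x)" "0 < f (norm y)"
  shows "\<exists>l \<gamma> L. rectifiable_path_on l \<gamma> \<and> \<gamma> 0 = x \<and> \<gamma> l = y \<and> has_M_length (rhoM f) l \<gamma> (ereal L) \<and>
           L \<le> sqrt (pi\<^sup>2 / 4 + 4) * dist x y / (f (norm x) * f (norm y))"
proof -
  obtain u v q \<theta> where uq: "norm u = 1" "norm q = 1" "inner u q = 0" and \<theta>: "0 \<le> \<theta>" "\<theta> \<le> pi"
    and v: "v = cos \<theta> *\<^sub>R u + sin \<theta> *\<^sub>R q" and xy: "norm x *\<^sub>R u = x" "norm y *\<^sub>R v = y"
    using polar_pair[OF assms(1)] by blast
  have "norm x *\<^sub>R u \<noteq> norm y *\<^sub>R v"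
    using \<open>x \<noteq> y\<close> by (simp add: xy)
  then obtain l \<gamma> L where path: "rectifiable_path_on l \<gamma>" "\<gamma> 0 = x" "\<gamma> l = y" "has_M_length (rhoM f) l \<gamma> (ereal L)"
    and L: "L \<le> min (norm x / (f (norm x))\<^sup>2) (norm y / (f (norm y))\<^sup>2) * \<theta>
              + 2 * \<bar>norm y - norm x\<bar> / (f (norm x) * f (norm y))"
    using polar_path[OF mono anti fc uq \<theta> v norm_ge_zero norm_ge_zero assms(6,7)] unfolding xy by blast
  have "(dist x y)\<^sup>2 = (norm x)\<^sup>2 + (norm y)\<^sup>2 - 2 * norm x * norm y * cos \<theta>"
    using dist_polar[OF uq, of "norm x" "norm y" \<theta>] by (simp add: v[symmetric] xy)
  then have "min (norm x / (f (norm x))\<^sup>2) (norm y / (f (norm y))\<^sup>2) * \<theta>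
      + 2 * \<bar>norm y - norm x\<bar> / (f (norm x) * f (norm y))
      \<le> sqrt (pi\<^sup>2 / 4 + 4) * dist x y / (f (norm x) * f (norm y))"
    by (intro arc_radial_bound) (use assms \<theta> in auto)
  then have "L \<le> sqrt (pi\<^sup>2 / 4 + 4) * dist x y / (f (norm x) * f (norm y))"
    using L by linarith
  then show ?thesis
    using path by blast
qed

lemma const_path_M_length:
  "rectifiable_path_on 1 (\<lambda>_. x) \<and> has_M_length (rhoM f) 1 (\<lambda>_. x :: 'a::euclidean_space) 0"
proof
  show "rectifiable_path_on 1 (\<lambda>_. x)"
    by (rule rectifiable_path_onI_lipschitz) auto
  have "psum (rhoM f) (\<lambda>_. x) = (\<lambda>_. 0)"
    by (auto simp: psum_def rhoM_def case_prod_unfold)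
  then show "has_M_length (rhoM f) 1 (\<lambda>_. x) 0"
    by (simp add: has_M_length_def)
qed

lemma quasiconvex_rhoM_I:
  fixes f :: "real \<Rightarrow> real"
  assumes "0 < c" and f_nonneg: "\<forall>t\<ge>0. 0 \<le> f t"
    and path: "\<And>x y :: 'a. x \<noteq> y \<Longrightarrow> 0 < f (norm x) \<Longrightarrow> 0 < f (norm y) \<Longrightarrow>
      \<exists>l \<gamma> L. rectifiable_path_on l \<gamma> \<and> \<gamma> 0 = x \<and> \<gamma> l = y \<and> has_M_length (rhoM f) l \<gamma> (ereal L) \<and>
        L \<le> c * dist x y / (f (norm x) * f (norm y))"
  shows "quasiconvex c (rhoM f :: 'a::euclidean_space \<Rightarrow> 'a \<Rightarrow> ereal)"
  unfolding quasiconvex_def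
proof (intro allI)
  fix x y :: 'a
  define S where "S = {L. \<exists>l \<gamma>. rectifiable_path_on l \<gamma> \<and> \<gamma> 0 = x \<and> \<gamma> l = y \<and> has_M_length (rhoM f) l \<gamma> L}"
  have "Inf S \<le> ereal c * rhoM f x y"
  proof (cases "x = y \<or> f (norm x) * f (norm y) = 0")
    case True
    show ?thesis
    proof (cases "x = y")
      case True
      then have "0 \<in> S"
        unfolding S_def using const_path_M_length[of x f] by fastforce
      then have "Inf S \<le> 0"
        by (rule Inf_lower)
      moreover have "rhoM f x y = 0"
        using True by (simp add: rhoM_def)
      ultimately show ?thesis
        by simp
    next
      case False
      then show ?thesis
        using \<open>x = y \<or> _\<close> \<open>0 < c\<close> by (simp add: rhoM_def)
    qed
  next
    case False
    then have "0 < f (norm x)" "0 < f (norm y)"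
      using f_nonneg by (auto simp: less_le)
    then obtain L where "ereal L \<in> S" "L \<le> c * dist x y / (f (norm x) * f (norm y))"
      using path[of x y] False unfolding S_def by blast
    then have "Inf S \<le> ereal (c * dist x y / (f (norm x) * f (norm y)))"
      by (meson Inf_lower ereal_less_eq(3) order_trans)
    then show ?thesis
      using False by (simp add: rhoM_def)
  qed
  then show "(INF L\<in>{L. \<exists>l \<gamma>. rectifiable_path_on l \<gamma> \<and> \<gamma> 0 = x \<and> \<gamma> l = y \<and> has_M_length (rhoM f) l \<gamma> L}. L)
      \<le> ereal c * rhoM f x y"
    by (simp add: S_def)
qed

lemma convex_mono_continuous_on_nonneg:
  fixes f :: "real \<Rightarrow> real"
  assumes mono: "mono_on {0..} f" and cvx: "convex_on {0..} f"
  shows "continuous_on {0..} f"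
proof -
  have "continuous (at x within {0..}) f" if "0 \<le> x" for x
  proof (cases "x = 0")
    case False
    have "continuous_on {0<..} f"
      by (rule convex_on_continuous) (auto intro: convex_on_subset[OF cvx])
    then show ?thesis
      using False that by (simp add: continuous_on_eq_continuous_at continuous_at_imp_continuous_within)
  next
    case True
    \<comment> \<open>At the endpoint, monotonicity bounds \<open>f\<close> from below and convexity from above by the chord through \<open>1\<close>.\<close>
    have near: "\<forall>\<^sub>F t in at 0 within {0..}. t \<in> {0<..<1::real}"
      unfolding eventually_at_filter by (auto simp: eventually_nhds_metric dist_real_def intro!: exI[of _ 1])
    have "(f \<longlongrightarrow> f 0) (at 0 within {0..})"
    proof (rule tendsto_sandwich[where f = "\<lambda>_. f 0" and h = "\<lambda>t. (1 - t) * f 0 + t * f 1"])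
      show "\<forall>\<^sub>F t in at 0 within {0..}. f 0 \<le> f t"
        using near by eventually_elim (use mono in \<open>auto simp: mono_on_def\<close>)
      have "f t \<le> (1 - t) * f 0 + t * f 1" if "t \<in> {0<..<1}" for t
        using convex_onD[OF cvx, of t 0 1] that by simp
      then show "\<forall>\<^sub>F t in at 0 within {0..}. f t \<le> (1 - t) * f 0 + t * f 1"
        using near by (rule eventually_mono[rotated])
      show "((\<lambda>t. (1 - t) * f 0 + t * f 1) \<longlongrightarrow> f 0) (at 0 within {0..})"
        by (auto intro!: tendsto_eq_intros)
    qed simp
    then show ?thesis
      using True by (simp add: continuous_within)
  qed
  then show ?thesis
    by (simp add: continuous_on_eq_continuous_within)
qed

theorem theorem1p3:
  fixes f :: "real \<Rightarrow> real"
  assumes "DIM('a::euclidean_space) \<ge> 2"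
    and "\<forall>t\<ge>0. f t \<ge> 0"
    and "moderately_increasing f"
    and "convex_on {0..} f"
  shows "\<exists>c. c \<le> sqrt (pi\<^sup>2 / 4 + 4) \<and> quasiconvex c (rhoM f :: 'a \<Rightarrow> 'a \<Rightarrow> ereal)"
proof -
  have mono: "mono_on {0..} f" and anti: "antimono_on {0<..} (\<lambda>t. f t / t)"
    using assms(3) by (auto simp: moderately_increasing_def)
  have fc: "continuous_on {0..} f"
    by (rule convex_mono_continuous_on_nonneg[OF mono assms(4)])
  have "0 < sqrt (pi\<^sup>2 / 4 + 4)"
    by (intro real_sqrt_gt_zero add_nonneg_pos) auto
  then have "quasiconvex (sqrt (pi\<^sup>2 / 4 + 4)) (rhoM f :: 'a \<Rightarrow> 'a \<Rightarrow> ereal)"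
    using assms(2) rhoM_path_bound[OF assms(1) mono anti fc] by (rule quasiconvex_rhoM_I)
  then show ?thesis
    by blast
qed

end
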